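(* Let $M\ge 1$ be a fixed integer, $\beta>0$, $\lambda,h\in\mathbb{R}$, and assume either $\beta\le 1$, or $\beta>1$ and $\lambda\neq 0$, $h\neq 0$. Then for every $\boldsymbol{\epsilon}\in\{-1,1\}^M$ the limit $$-\beta f(\beta,M;\lambda,h\boldsymbol{\epsilon}) := \lim_{N\to\infty}\frac1N\,\mathbb{E}_{\mathcal{S}\sim P^{CW}_{\beta,h\boldsymbol{\epsilon}}}\big[\log Z(\mathcal{S};\beta,\lambda,M)\big]$$ exists, does not depend on $\boldsymbol{\epsilon}$, and equals $$\sup_{\mathbf{p}\in\mathbb{R}^M} g(\mathbf{p};\beta,\lambda,h),\qquad g(\mathbf{p};\beta,\lambda,h)=\log 2-\frac{\beta|\mathbf{p}|^2}{2}+\big\langle \log\cosh(\beta\,\mathbf{s}\cdot\mathbf{p}+\lambda)\big\rangle_{\mathbf{s}},$$ where $\langle\cdot\rangle_{\mathbf{s}}$ is the expectation over a random vector $\mathbf{s}\in\{-1,1\}^M$ with i.i.d. entries of mean $m_0(\beta,h)$.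
   Context: For $N\ge 2$, a training set is $\mathcal{S}=(\mathbf{s}^1,\dots,\mathbf{s}^M)$ with $\mathbf{s}^\mu=(s^\mu_1,\dots,s^\mu_N)\in\{-1,1\}^N$. For $\mathbf{h}=(h^1,\dots,h^M)\in\mathbb{R}^M$, the Curie–Weiss product measure is $$P^{CW}_{\beta,\mathbf{h}}(\mathcal{S})=\prod_{\mu=1}^M z_{\beta,h^\mu}^{-1}\exp\Big(\frac{\beta}{N}\sum_{i<j}s^\mu_is^\mu_j+h^\mu\sum_{i=1}^N s^\mu_i\Big),$$ with $z_{\beta,h^\mu}$ the normalizing constants. The partition function is $$Z(\mathcal{S};\beta,\lambda,M)=\sum_{\boldsymbol{\xi}\in\{-1,1\}^N}\exp\Big(\frac{\beta}{N}\sum_{\mu=1}^M\sum_{i<j}s^\mu_is^\mu_j\xi_i\xi_j+\lambda\sum_{i=1}^N\xi_i\Big).$$ For $\beta>0$, $h\in\mathbb{R}$, $m_0(\beta,h):=\operatorname{argmax}_{x\in\mathbb{R}}\big[\log 2+\log\cosh(\beta x+h)-\beta x^2/2\big]$ (unique when $h\neq0$ or $\beta\le1$); it solves $m_0=\tanh(\beta m_0+h)$. *)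

theory Defs
  imports "HOL-Analysis.Analysis"
begin

definition spins :: "nat \<Rightarrow> (nat \<Rightarrow> real) set" where
  "spins N = ({..<N} \<rightarrow>\<^sub>E {-1, 1})"

text \<open>Training sets S = (s^1,...,s^M): S mu i = s^mu_i for mu < M, i < N.\<close>
definition training_sets :: "nat \<Rightarrow> nat \<Rightarrow> (nat \<Rightarrow> nat \<Rightarrow> real) set" where
  "training_sets M N = ({..<M} \<rightarrow>\<^sub>E spins N)"

definition cw_weight :: "real \<Rightarrow> real \<Rightarrow> nat \<Rightarrow> (nat \<Rightarrow> real) \<Rightarrow> real" where
  "cw_weight \<beta> h N s =
     exp (\<beta> / real N * (\<Sum>j<N. \<Sum>i<j. s i * s j) + h * (\<Sum>i<N. s i))"

definition cw_z :: "real \<Rightarrow> real \<Rightarrow> nat \<Rightarrow> real" where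
  "cw_z \<beta> h N = (\<Sum>s\<in>spins N. cw_weight \<beta> h N s)"

definition P_CW :: "real \<Rightarrow> (nat \<Rightarrow> real) \<Rightarrow> nat \<Rightarrow> nat \<Rightarrow> (nat \<Rightarrow> nat \<Rightarrow> real) \<Rightarrow> real" where
  "P_CW \<beta> h M N S = (\<Prod>\<mu><M. cw_weight \<beta> (h \<mu>) N (S \<mu>) / cw_z \<beta> (h \<mu>) N)"

definition Zpart :: "nat \<Rightarrow> (nat \<Rightarrow> nat \<Rightarrow> real) \<Rightarrow> real \<Rightarrow> real \<Rightarrow> nat \<Rightarrow> real" where
  "Zpart N S \<beta> lam M =
     (\<Sum>\<xi>\<in>spins N. exp (\<beta> / real N * (\<Sum>\<mu><M. \<Sum>j<N. \<Sum>i<j. S \<mu> i * S \<mu> j * \<xi> i * \<xi> j)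
                         + lam * (\<Sum>i<N. \<xi> i)))"

definition expected_logZ :: "real \<Rightarrow> real \<Rightarrow> (nat \<Rightarrow> real) \<Rightarrow> nat \<Rightarrow> nat \<Rightarrow> real" where
  "expected_logZ \<beta> lam h M N =
     (\<Sum>S\<in>training_sets M N. P_CW \<beta> h M N S * ln (Zpart N S \<beta> lam M))"

definition m0_obj :: "real \<Rightarrow> real \<Rightarrow> real \<Rightarrow> real" where
  "m0_obj \<beta> h x = ln 2 + ln (cosh (\<beta> * x + h)) - \<beta> * x\<^sup>2 / 2"

definition m0 :: "real \<Rightarrow> real \<Rightarrow> real" where
  "m0 \<beta> h = (THE x. \<forall>y. m0_obj \<beta> h y \<le> m0_obj \<beta> h x)"

text \<open>Law of s in {-1,1}^M with i.i.d. entries of mean m: P(s) = prod (1 + m s_mu)/2.\<close>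
definition iid_prob :: "real \<Rightarrow> nat \<Rightarrow> (nat \<Rightarrow> real) \<Rightarrow> real" where
  "iid_prob m M s = (\<Prod>\<mu><M. (1 + m * s \<mu>) / 2)"

definition g_fun :: "nat \<Rightarrow> (nat \<Rightarrow> real) \<Rightarrow> real \<Rightarrow> real \<Rightarrow> real \<Rightarrow> real" where
  "g_fun M p \<beta> lam h =
     ln 2 - \<beta> * (\<Sum>\<mu><M. (p \<mu>)\<^sup>2) / 2
     + (\<Sum>s\<in>spins M. iid_prob (m0 \<beta> h) M s *
          ln (cosh (\<beta> * (\<Sum>\<mu><M. s \<mu> * p \<mu>) + lam)))"

end

theory Submission
  imports Defs "HOL-Real_Asymp.Real_Asymp"
begin

text \<open>Writing the Hopfield energy through the overlaps of \<open>\<xi>\<close> with the patterns and linearising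
  each squared overlap (a discrete Hubbard--Stratonovich transform), \<open>ln Z / N\<close> equals, up to
  \<open>O(log N / N)\<close>, the supremum over \<open>p\<close> of \<open>g\<close> averaged over the empirical law of the columns of
  the training set, and this supremum is Lipschitz in that law. Under the Curie--Weiss product
  measure the empirical column law concentrates on the product law with means \<open>m0 (\<beta>, h \<epsilon>\<^sub>\<mu>)\<close>:
  by exchangeability its first two moments are governed by the mean magnetisation and the pair
  correlation, which converge to \<open>m0\<close> and \<open>m0\<^sup>2\<close> because the Curie--Weiss free energy is convex in
  \<open>(\<beta>, h)\<close> and its limit \<open>max m0_obj\<close> is differentiable where the maximiser is unique. Finally
  \<open>m0 (\<beta>, -h) = - m0 (\<beta>, h)\<close>, and flipping the signs of the coordinates of \<open>p\<close> removes \<open>\<epsilon>\<close>.\<close>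

lemma spins_values: "\<xi> \<in> spins N \<Longrightarrow> i < N \<Longrightarrow> \<xi> i = -1 \<or> \<xi> i = 1"
  unfolding spins_def by (auto simp: PiE_iff)

lemma spins_square: "\<xi> \<in> spins N \<Longrightarrow> i < N \<Longrightarrow> (\<xi> i)\<^sup>2 = 1"
  using spins_values by fastforce

lemma spins_abs: "\<xi> \<in> spins N \<Longrightarrow> i < N \<Longrightarrow> \<bar>\<xi> i\<bar> = 1"
  using spins_values by fastforce

lemma finite_spins: "finite (spins N)"
  unfolding spins_def by (auto intro!: finite_PiE)

lemma spins_nonempty: "spins N \<noteq> {}"
  unfolding spins_def by (simp add: PiE_eq_empty_iff)

lemma training_sets_values:
  "S \<in> training_sets M N \<Longrightarrow> \<mu> < M \<Longrightarrow> i < N \<Longrightarrow> S \<mu> i = -1 \<or> S \<mu> i = 1"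
  unfolding training_sets_def using spins_values by (fastforce simp: PiE_iff)

lemma sum_lower_pairs:
  fixes N :: nat
  shows "(\<Sum>j<N. \<Sum>i<j. x i * x j) = ((\<Sum>i<N. x i)\<^sup>2 - (\<Sum>i<N. (x i)\<^sup>2)) / (2::real)"
proof (induction N)
  case (Suc N)
  have "(\<Sum>j<Suc N. \<Sum>i<j. x i * x j) = (\<Sum>j<N. \<Sum>i<j. x i * x j) + (\<Sum>i<N. x i) * x N"
    by (simp add: sum_distrib_right)
  with Suc show ?case
    by (simp add: power2_eq_square algebra_simps add_divide_distrib)
qed simp

lemma sum_spins_exp:
  "(\<Sum>\<xi>\<in>spins N. exp (\<Sum>i<N. \<xi> i * t i)) = (\<Prod>i<N. 2 * cosh (t i))"
proof -
  have "(\<Prod>i<N. 2 * cosh (t i)) = (\<Prod>i<N. \<Sum>y\<in>{-1,1::real}. exp (y * t i))"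
    by (intro prod.cong) (auto simp: cosh_def)
  also have "\<dots> = (\<Sum>\<xi>\<in>spins N. \<Prod>i<N. exp (\<xi> i * t i))"
    unfolding spins_def by (rule prod_sum_PiE) auto
  finally show ?thesis
    by (simp add: exp_sum)
qed

lemma has_real_derivative_ln_cosh: "((\<lambda>x::real. ln (cosh x)) has_real_derivative tanh x) (at x)"
proof -
  have "((\<lambda>x::real. ln (cosh x)) has_real_derivative (1 / cosh x * sinh x)) (at x)"
    by (auto intro!: derivative_eq_intros)
  then show ?thesis
    by (simp add: tanh_def)
qed

lemma has_real_derivative_tanh: "(tanh has_real_derivative (1 - (tanh x)\<^sup>2)) (at (x::real))"
proof -
  have "(tanh has_real_derivative (1 - (tanh x)\<^sup>2) * 1) (at x)"
    by (rule has_field_derivative_tanh) (auto intro: DERIV_ident)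
  then show ?thesis
    by simp
qed

lemma abs_tanh_less_one: "\<bar>tanh (x::real)\<bar> < 1"
  using tanh_real_lt_1[of x] tanh_real_gt_neg1[of x] by linarith

lemma ln_cosh_nonneg: "ln (cosh (x::real)) \<ge> 0"
  using cosh_real_ge_1 by simp

lemma ln_cosh_le_abs: "ln (cosh (x::real)) \<le> \<bar>x\<bar>"
proof -
  have "cosh x \<le> exp \<bar>x\<bar>"
    unfolding cosh_def by (cases "x \<ge> 0") (auto simp: field_simps)
  then show ?thesis
    using cosh_real_pos[of x] ln_le_cancel_iff[of "cosh x" "exp \<bar>x\<bar>"] by simp
qed

lemma ln_cosh_diff_le: "ln (cosh b) - ln (cosh a) \<le> (b - a) * tanh (b::real)"
proof (cases a b rule: linorder_cases)
  case less
  obtain z where z: "a < z" "z < b" "ln (cosh b) - ln (cosh a) = (b - a) * tanh z"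
    using MVT2[OF less, of "\<lambda>x. ln (cosh x)" tanh] has_real_derivative_ln_cosh by blast
  with less show ?thesis
    by (simp add: mult_left_mono)
next
  case greater
  obtain z where z: "b < z" "z < a" "ln (cosh a) - ln (cosh b) = (a - b) * tanh z"
    using MVT2[OF greater, of "\<lambda>x. ln (cosh x)" tanh] has_real_derivative_ln_cosh by blast
  then have "(a - b) * tanh b \<le> (a - b) * tanh z"
    using greater by (simp add: mult_left_mono)
  with z show ?thesis
    by (simp add: algebra_simps)
qed simp

lemma tanh_diff_less: "v < (u::real) \<Longrightarrow> tanh u - tanh v < u - v"
proof -
  \<comment> \<open>\<open>t - tanh t\<close> has derivative \<open>tanh\<^sup>2 t\<close>, which vanishes only at \<open>0\<close>.\<close>
  have increasing: "v - tanh v < u - tanh u" if "v < u" "0 \<le> v \<or> u \<le> 0" for u v :: real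
  proof (rule DERIV_pos_imp_increasing_open[OF \<open>v < u\<close>])
    fix t assume "v < t" "t < u"
    with that have "t \<noteq> 0"
      by auto
    then show "\<exists>y. ((\<lambda>t. t - tanh t) has_real_derivative y) (at t) \<and> 0 < y"
      using DERIV_diff[OF DERIV_ident has_real_derivative_tanh] by fastforce
  next
    show "continuous_on {v..u} (\<lambda>t. t - tanh t)"
      by (intro continuous_intros) (auto simp: cosh_real_pos[THEN less_imp_neq, symmetric])
  qed
  assume "v < u"
  then show ?thesis
    using increasing[of v u] increasing[of v 0] increasing[of 0 u] by (cases "0 \<le> v \<or> u \<le> 0") auto
qed

lemma tanh_lipschitz: "\<bar>tanh a - tanh b\<bar> \<le> \<bar>a - (b::real)\<bar>"
  using tanh_diff_less[of a b] tanh_diff_less[of b a]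
  by (cases a b rule: linorder_cases) auto

section \<open>The Curie--Weiss variational problem\<close>

definition cw_regime :: "real \<Rightarrow> real \<Rightarrow> bool" where
  "cw_regime \<beta> h \<longleftrightarrow> \<beta> > 0 \<and> (\<beta> \<le> 1 \<or> h \<noteq> 0)"

definition maximises_m0_obj :: "real \<Rightarrow> real \<Rightarrow> real \<Rightarrow> bool" where
  "maximises_m0_obj \<beta> h x \<longleftrightarrow> (\<forall>y. m0_obj \<beta> h y \<le> m0_obj \<beta> h x)"

lemma cw_regime_minus: "cw_regime \<beta> h \<Longrightarrow> cw_regime \<beta> (-h)"
  unfolding cw_regime_def by auto

lemma m0_obj_minus: "m0_obj \<beta> (-h) (-x) = m0_obj \<beta> h x"
proof -
  have "\<beta> * - x + - h = - (\<beta> * x + h)"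
    by simp
  then show ?thesis
    unfolding m0_obj_def by (simp only: cosh_minus) simp
qed

lemma maximises_m0_obj_minus: "maximises_m0_obj \<beta> h x \<Longrightarrow> maximises_m0_obj \<beta> (-h) (-x)"
  unfolding maximises_m0_obj_def by (metis m0_obj_minus minus_minus)

lemma has_real_derivative_m0_obj:
  "(m0_obj \<beta> h has_real_derivative (\<beta> * tanh (\<beta> * x + h) - \<beta> * x)) (at x)"
proof -
  have "((\<lambda>x. ln (cosh (\<beta> * x + h))) has_real_derivative tanh (\<beta> * x + h) * \<beta>) (at x)"
    by (rule DERIV_chain2[OF has_real_derivative_ln_cosh]) (auto intro!: derivative_eq_intros)
  moreover have "((\<lambda>x. \<beta> * x\<^sup>2 / 2) has_real_derivative \<beta> * x) (at x)"
    by (auto intro!: derivative_eq_intros)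
  ultimately have "((\<lambda>x. ln 2 + ln (cosh (\<beta> * x + h)) - \<beta> * x\<^sup>2 / 2) has_real_derivative
      (0 + tanh (\<beta> * x + h) * \<beta> - \<beta> * x)) (at x)"
    by (intro DERIV_diff DERIV_add DERIV_const)
  then show ?thesis
    unfolding m0_obj_def[abs_def] by (simp add: algebra_simps)
qed

lemma continuous_on_m0_obj: "continuous_on S (m0_obj \<beta> h)"
  by (intro continuous_at_imp_continuous_on ballI DERIV_isCont[OF has_real_derivative_m0_obj])

lemma maximiser_fixed_point:
  assumes "\<beta> \<noteq> 0" "maximises_m0_obj \<beta> h x"
  shows "x = tanh (\<beta> * x + h)"
proof -
  have "\<beta> * tanh (\<beta> * x + h) - \<beta> * x = 0"
    using DERIV_local_max[OF has_real_derivative_m0_obj, of 1] assms(2)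
    unfolding maximises_m0_obj_def by auto
  with assms(1) show ?thesis
    by (simp add: right_diff_distrib[symmetric])
qed

lemma m0_obj_le: "\<beta> \<ge> 0 \<Longrightarrow> m0_obj \<beta> h x \<le> ln 2 + \<beta> * \<bar>x\<bar> + \<bar>h\<bar> - \<beta> * x\<^sup>2 / 2"
  unfolding m0_obj_def using ln_cosh_le_abs[of "\<beta> * x + h"] abs_triangle_ineq[of "\<beta> * x" h]
  by (simp add: abs_mult)

lemma ln_two_le_m0_obj_zero: "ln 2 \<le> m0_obj \<beta> h 0"
  unfolding m0_obj_def using ln_cosh_nonneg by simp

lemma m0_obj_small_far:
  assumes "\<beta> > 0"
  obtains X where "X \<ge> 1"
    "\<And>\<beta>' h' x. \<beta> / 2 \<le> \<beta>' \<Longrightarrow> \<beta>' \<le> 2 * \<beta> \<Longrightarrow> \<bar>h'\<bar> \<le> \<bar>h\<bar> + 1 \<Longrightarrow> X \<le> \<bar>x\<bar>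
      \<Longrightarrow> m0_obj \<beta>' h' x \<le> ln 2 - 1"
proof
  define X where "X = 8 + 4 * (\<bar>h\<bar> + 2) / \<beta>"
  have X1: "X \<ge> 1"
    unfolding X_def using assms by simp
  then show "X \<ge> 1" .
  fix \<beta>' h' x
  assume \<beta>': "\<beta> / 2 \<le> \<beta>'" "\<beta>' \<le> 2 * \<beta>" and h': "\<bar>h'\<bar> \<le> \<bar>h\<bar> + 1" and x: "X \<le> \<bar>x\<bar>"
  have x1: "1 \<le> \<bar>x\<bar>"
    using x X1 by simp
  have "2 * \<beta> + \<bar>h\<bar> + 2 \<le> \<beta> * \<bar>x\<bar> / 4"
  proof -
    have "\<beta> * X \<le> \<beta> * \<bar>x\<bar>"
      using x assms by simp
    moreover have "\<beta> * X = 8 * \<beta> + 4 * \<bar>h\<bar> + 8"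
      unfolding X_def using assms by (simp add: field_simps)
    ultimately show ?thesis
      by linarith
  qed
  then have "\<bar>x\<bar> * (\<beta> * \<bar>x\<bar> / 4) \<ge> \<bar>x\<bar> * (2 * \<beta> + \<bar>h\<bar> + 2)"
    by (rule mult_left_mono) simp
  moreover have "\<bar>x\<bar> * (2 * \<beta> + \<bar>h\<bar> + 2) \<ge> 2 * \<beta> * \<bar>x\<bar> + \<bar>h\<bar> + 2"
    using x1 assms mult_right_mono[OF x1, of "\<bar>h\<bar> + 2"] by (simp add: algebra_simps)
  ultimately have quad: "\<beta> * x\<^sup>2 / 4 \<ge> 2 * \<beta> * \<bar>x\<bar> + \<bar>h\<bar> + 2"
    by (simp add: power2_eq_square abs_mult_self_eq algebra_simps)
  have "\<beta>' * \<bar>x\<bar> \<le> 2 * \<beta> * \<bar>x\<bar>" "\<beta> * x\<^sup>2 / 4 \<le> \<beta>' * x\<^sup>2 / 2"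
    using \<beta>' mult_right_mono[OF \<beta>'(1), of "x\<^sup>2"] by (auto intro: mult_right_mono)
  then show "m0_obj \<beta>' h' x \<le> ln 2 - 1"
    using m0_obj_le[of \<beta>' h' x] \<beta>' h' quad assms by linarith
qed

lemma m0_obj_has_maximiser:
  assumes "\<beta> > 0"
  obtains x where "maximises_m0_obj \<beta> h x"
proof -
  obtain X where X: "X \<ge> 1" and far: "\<And>\<beta>' h' x. \<beta> / 2 \<le> \<beta>' \<Longrightarrow> \<beta>' \<le> 2 * \<beta>
      \<Longrightarrow> \<bar>h'\<bar> \<le> \<bar>h\<bar> + 1 \<Longrightarrow> X \<le> \<bar>x\<bar> \<Longrightarrow> m0_obj \<beta>' h' x \<le> ln 2 - 1"
    using m0_obj_small_far[OF assms, of h] by blast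
  obtain x where x: "x \<in> {-X..X}" "\<And>y. y \<in> {-X..X} \<Longrightarrow> m0_obj \<beta> h y \<le> m0_obj \<beta> h x"
    using continuous_attains_sup[OF compact_Icc _ continuous_on_m0_obj, of "-X" X \<beta> h] X(1) by auto
  have "m0_obj \<beta> h y \<le> m0_obj \<beta> h x" for y
  proof (cases "\<bar>y\<bar> \<le> X")
    case False
    then have "m0_obj \<beta> h y \<le> ln 2 - 1"
      using far[of \<beta> h y] assms by simp
    also have "\<dots> \<le> m0_obj \<beta> h x"
      using ln_two_le_m0_obj_zero[of \<beta> h] x(2)[of 0] X(1) by simp
    finally show ?thesis .
  qed (use x in \<open>auto simp: abs_le_iff\<close>)
  then show thesis
    using that unfolding maximises_m0_obj_def by blast
qed

lemma fixed_point_unique_of_le_one: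
  fixes \<beta> h x y :: real
  assumes "0 < \<beta>" "\<beta> \<le> 1" "x = tanh (\<beta> * x + h)" "y = tanh (\<beta> * y + h)"
  shows "x = y"
proof -
  have False if "a < b" "a = tanh (\<beta> * a + h)" "b = tanh (\<beta> * b + h)" for a b
  proof -
    have "b - a < (\<beta> * b + h) - (\<beta> * a + h)"
      using tanh_diff_less[of "\<beta> * a + h" "\<beta> * b + h"] that assms(1) by simp
    moreover have "\<beta> * (b - a) \<le> b - a"
      using assms(2) that(1) by (simp add: mult_left_le_one_le)
    ultimately show False
      by (simp add: algebra_simps)
  qed
  with assms(3,4) show ?thesis
    by (cases x y rule: linorder_cases) auto
qed

text \<open>For \<open>h > 0\<close> the map \<open>t \<mapsto> tanh (\<beta> t + h) - t\<close> is strictly concave on \<open>t > 0\<close> and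
  positive at \<open>0\<close>, so it has at most one positive zero.\<close>

lemma positive_fixed_point_unique:
  fixes \<beta> h x y :: real
  assumes "\<beta> > 0" "h > 0" "x = tanh (\<beta> * x + h)" "y = tanh (\<beta> * y + h)" "0 < x" "0 < y"
  shows "x = y"
proof -
  define g where "g t = tanh (\<beta> * t + h) - t" for t
  define g' where "g' t = (1 - (tanh (\<beta> * t + h))\<^sup>2) * \<beta> - 1" for t
  have deriv: "(g has_real_derivative g' t) (at t)" for t
  proof -
    have "((\<lambda>t. \<beta> * t + h) has_real_derivative \<beta>) (at t)"
      by (auto intro!: derivative_eq_intros)
    then show ?thesis
      unfolding g_def[abs_def] g'_def
      by (intro DERIV_diff DERIV_ident DERIV_chain2[OF has_real_derivative_tanh])
  qed
  have False if "0 < a" "a < b" "g a = 0" "g b = 0" for a b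
  proof -
    obtain z1 where z1: "0 < z1" "z1 < a" "g a - g 0 = (a - 0) * g' z1"
      using MVT2[OF \<open>0 < a\<close>, of g g'] deriv by blast
    obtain z2 where z2: "a < z2" "z2 < b" "g b - g a = (b - a) * g' z2"
      using MVT2[OF \<open>a < b\<close>, of g g'] deriv by blast
    have "g 0 = tanh h"
      by (simp add: g_def)
    with z1(3) that(3) have "a * g' z1 = - tanh h"
      by simp
    moreover have "tanh h > 0"
      using assms(2) by simp
    ultimately have "a * g' z1 < 0"
      by simp
    with \<open>0 < a\<close> have "g' z1 < 0"
      by (simp add: mult_less_0_iff)
    moreover have "g' z2 = 0"
      using z2 that by simp
    moreover have "(tanh (\<beta> * z1 + h))\<^sup>2 < (tanh (\<beta> * z2 + h))\<^sup>2"
    proof (rule power_strict_mono)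
      show "tanh (\<beta> * z1 + h) < tanh (\<beta> * z2 + h)"
        using assms(1) z1 z2 by simp
      show "0 \<le> tanh (\<beta> * z1 + h)"
        using assms(1,2) z1 by simp
    qed simp
    then have "g' z2 < g' z1"
      unfolding g'_def using assms(1) by (simp add: mult_strict_right_mono)
    ultimately show False
      by simp
  qed
  moreover have "g x = 0" "g y = 0"
    using assms(3,4) unfolding g_def by simp_all
  ultimately show ?thesis
    using assms(5,6) by (cases x y rule: linorder_cases) auto
qed

lemma maximiser_pos:
  assumes "\<beta> > 0" "h > 0" "maximises_m0_obj \<beta> h x"
  shows "x > 0"
proof (rule ccontr)
  assume "\<not> x > 0"
  moreover have "x \<noteq> 0"
    using maximiser_fixed_point[OF _ assms(3)] assms(1,2) by auto
  ultimately have "\<beta> * x < 0"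
    using assms(1) by (simp add: mult_pos_neg)
  then have "\<bar>\<beta> * x + h\<bar> < \<beta> * (- x) + h"
    using assms(2) by (simp add: abs_less_iff)
  then have "cosh (\<beta> * x + h) < cosh (\<beta> * (- x) + h)"
    by (subst cosh_real_abs[symmetric]) (auto simp: cosh_real_nonneg_less_iff simp del: cosh_real_abs)
  then have "m0_obj \<beta> h x < m0_obj \<beta> h (- x)"
    unfolding m0_obj_def by simp
  with assms(3) show False
    unfolding maximises_m0_obj_def by (meson not_le)
qed

lemma maximiser_unique:
  assumes "cw_regime \<beta> h" "maximises_m0_obj \<beta> h x" "maximises_m0_obj \<beta> h y"
  shows "x = y"
proof -
  have \<beta>: "\<beta> > 0"
    using assms(1) unfolding cw_regime_def by simp
  then have \<beta>0: "\<beta> \<noteq> 0"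
    by simp
  have unique_pos: "a = b" if "h' > 0" "maximises_m0_obj \<beta> h' a" "maximises_m0_obj \<beta> h' b" for h' a b
    using maximiser_fixed_point[OF \<beta>0 that(2)] maximiser_fixed_point[OF \<beta>0 that(3)]
      maximiser_pos[OF \<beta> that(1,2)] maximiser_pos[OF \<beta> that(1,3)]
    by (rule positive_fixed_point_unique[OF \<beta> that(1)])
  consider "\<beta> \<le> 1" | "h > 0" | "h < 0"
    using assms(1) unfolding cw_regime_def by fastforce
  then show ?thesis
  proof cases
    case 1
    show ?thesis
      using maximiser_fixed_point[OF \<beta>0 assms(2)] maximiser_fixed_point[OF \<beta>0 assms(3)]
      by (rule fixed_point_unique_of_le_one[OF \<beta> 1])
  next
    case 2
    then show ?thesis
      using unique_pos assms(2,3) by blast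
  next
    case 3
    then have "- x = - y"
      by (intro unique_pos[of "-h"] maximises_m0_obj_minus assms(2,3)) simp
    then show ?thesis
      by simp
  qed
qed

lemma m0_maximises:
  assumes "cw_regime \<beta> h"
  shows "maximises_m0_obj \<beta> h (m0 \<beta> h)"
proof -
  obtain x where "maximises_m0_obj \<beta> h x"
    using m0_obj_has_maximiser assms unfolding cw_regime_def by blast
  then have "\<exists>!x. maximises_m0_obj \<beta> h x"
    using maximiser_unique[OF assms] by blast
  then show ?thesis
    unfolding m0_def maximises_m0_obj_def[symmetric] by (rule theI')
qed

lemma m0_eqI: "cw_regime \<beta> h \<Longrightarrow> maximises_m0_obj \<beta> h x \<Longrightarrow> m0 \<beta> h = x"
  using maximiser_unique m0_maximises by blast

lemma m0_minus: "cw_regime \<beta> h \<Longrightarrow> m0 \<beta> (-h) = - m0 \<beta> h"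
  by (intro m0_eqI cw_regime_minus maximises_m0_obj_minus m0_maximises)

lemma m0_fixed_point:
  assumes "cw_regime \<beta> h"
  shows "m0 \<beta> h = tanh (\<beta> * m0 \<beta> h + h)"
proof -
  have "\<beta> \<noteq> 0"
    using assms unfolding cw_regime_def by simp
  then show ?thesis
    using m0_maximises[OF assms] by (rule maximiser_fixed_point)
qed

lemma abs_m0_less_one: "cw_regime \<beta> h \<Longrightarrow> \<bar>m0 \<beta> h\<bar> < 1"
  using m0_fixed_point abs_tanh_less_one by metis

lemma SUP_m0_obj: "cw_regime \<beta> h \<Longrightarrow> (SUP x. m0_obj \<beta> h x) = m0_obj \<beta> h (m0 \<beta> h)"
  using m0_maximises unfolding maximises_m0_obj_def by (intro cSup_eq_maximum) auto

lemma m0_obj_gap: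
  assumes "cw_regime \<beta> h" "r > 0"
  obtains \<gamma> where "\<gamma> > 0" "\<And>x. r \<le> \<bar>x - m0 \<beta> h\<bar> \<Longrightarrow> m0_obj \<beta> h x \<le> m0_obj \<beta> h (m0 \<beta> h) - \<gamma>"
proof -
  let ?m = "m0 \<beta> h" and ?f = "m0_obj \<beta> h"
  have \<beta>: "\<beta> > 0"
    using assms(1) unfolding cw_regime_def by simp
  have max: "?f y \<le> ?f ?m" for y
    using m0_maximises[OF assms(1)] unfolding maximises_m0_obj_def by blast
  obtain X where "X \<ge> 1" and far: "\<And>\<beta>' h' x. \<beta> / 2 \<le> \<beta>' \<Longrightarrow> \<beta>' \<le> 2 * \<beta>
      \<Longrightarrow> \<bar>h'\<bar> \<le> \<bar>h\<bar> + 1 \<Longrightarrow> X \<le> \<bar>x\<bar> \<Longrightarrow> m0_obj \<beta>' h' x \<le> ln 2 - 1"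
    using m0_obj_small_far[OF \<beta>, of h] by blast
  have far': "?f x \<le> ?f ?m - 1" if "X \<le> \<bar>x\<bar>" for x
    using far[of \<beta> h x] that \<beta> ln_two_le_m0_obj_zero[of \<beta> h] max[of 0] by simp
  define K where "K = {-X..X} \<inter> {x. r \<le> \<bar>x - ?m\<bar>}"
  have "compact K"
    unfolding K_def by (intro compact_Int_closed compact_Icc closed_Collect_le continuous_intros)
  show thesis
  proof (cases "K = {}")
    case True
    have "X \<le> \<bar>x\<bar>" if "r \<le> \<bar>x - ?m\<bar>" for x
    proof (rule ccontr)
      assume "\<not> X \<le> \<bar>x\<bar>"
      with that have "x \<in> K"
        unfolding K_def by (auto simp: abs_less_iff)
      with True show False
        by simp
    qed
    with far' show thesis
      by (intro that[of 1]) auto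
  next
    case False
    obtain z where z: "z \<in> K" "\<And>y. y \<in> K \<Longrightarrow> ?f y \<le> ?f z"
      using continuous_attains_sup[OF \<open>compact K\<close> False continuous_on_m0_obj] by blast
    have "?f z < ?f ?m"
    proof (rule ccontr)
      assume "\<not> ?f z < ?f ?m"
      then have "maximises_m0_obj \<beta> h z"
        unfolding maximises_m0_obj_def using max by (meson not_less order_trans)
      then have "?m = z"
        by (rule m0_eqI[OF assms(1)])
      with z(1) assms(2) show False
        unfolding K_def by simp
    qed
    show thesis
    proof (rule that[of "min 1 (?f ?m - ?f z)"])
      fix x
      assume x: "r \<le> \<bar>x - ?m\<bar>"
      show "?f x \<le> ?f ?m - min 1 (?f ?m - ?f z)"
      proof (cases "X \<le> \<bar>x\<bar>")
        case True
        then show ?thesis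
          using far' by fastforce
      next
        case False
        with x have "x \<in> K"
          unfolding K_def by (auto simp: abs_less_iff)
        then show ?thesis
          using z(2) by fastforce
      qed
    qed (use \<open>?f z < ?f ?m\<close> in simp)
  qed
qed

lemma abs_mult_le_mult: "\<bar>a\<bar> \<le> A \<Longrightarrow> \<bar>b\<bar> \<le> B \<Longrightarrow> \<bar>a * b\<bar> \<le> A * (B::real)"
  by (simp add: abs_mult mult_mono')

lemma m0_obj_perturb_le:
  "m0_obj (\<beta> + \<delta> * u) (h + \<delta> * v) x - m0_obj \<beta> h x
     \<le> \<delta> * ((u * x + v) * tanh ((\<beta> + \<delta> * u) * x + (h + \<delta> * v)) - u * x\<^sup>2 / 2)"
proof -
  have "ln (cosh ((\<beta> + \<delta> * u) * x + (h + \<delta> * v))) - ln (cosh (\<beta> * x + h))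
      \<le> \<delta> * (u * x + v) * tanh ((\<beta> + \<delta> * u) * x + (h + \<delta> * v))"
    using ln_cosh_diff_le[of "(\<beta> + \<delta> * u) * x + (h + \<delta> * v)" "\<beta> * x + h"] by (simp add: algebra_simps)
  then show ?thesis
    unfolding m0_obj_def by (simp add: field_simps)
qed

lemma perturbed_slope_bounded:
  fixes u v x X a :: real
  assumes "\<bar>u\<bar> \<le> 1" "\<bar>v\<bar> \<le> 1" "\<bar>x\<bar> \<le> X"
  shows "(u * x + v) * tanh a - u * x\<^sup>2 / 2 \<le> X + 1 + X\<^sup>2 / 2"
proof -
  have "\<bar>u * x\<bar> \<le> 1 * X"
    using assms by (intro abs_mult_le_mult)
  then have "\<bar>(u * x + v) * tanh a\<bar> \<le> (X + 1) * 1"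
    using assms(2) abs_tanh_less_one[of a] by (intro abs_mult_le_mult) auto
  moreover have "x\<^sup>2 \<le> X\<^sup>2"
    using power_mono[OF assms(3) abs_ge_zero, of 2] by simp
  then have "\<bar>u * x\<^sup>2\<bar> \<le> 1 * X\<^sup>2"
    using assms(1) by (intro abs_mult_le_mult) auto
  ultimately show ?thesis
    by (auto simp: abs_le_iff)
qed

text \<open>\<open>u m\<^sup>2 / 2 + v m\<close> is the derivative of \<open>max m0_obj\<close> in the direction \<open>(u, v)\<close> of \<open>(\<beta>, h)\<close>.\<close>

lemma perturbed_slope_near_fixed_point:
  fixes \<beta> h m u v x r \<delta> :: real
  assumes m: "m = tanh (\<beta> * m + h)" and "\<beta> > 0" "\<bar>u\<bar> \<le> 1" "\<bar>v\<bar> \<le> 1"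
    and "\<bar>x - m\<bar> \<le> r" "r \<le> 1" "0 \<le> \<delta>"
  shows "(u * x + v) * tanh ((\<beta> + \<delta> * u) * x + (h + \<delta> * v)) - u * x\<^sup>2 / 2
    \<le> u * m\<^sup>2 / 2 + v * m + (5/2 + 2 * \<beta>) * r + 6 * \<delta>"
proof -
  define a where "a = (\<beta> + \<delta> * u) * x + (h + \<delta> * v)"
  have "\<bar>tanh (\<beta> * m + h)\<bar> < 1"
    by (rule abs_tanh_less_one)
  then have m1: "\<bar>m\<bar> \<le> 1"
    by (simp only: m[symmetric])
  have x2: "\<bar>x\<bar> \<le> 2"
    using assms(5,6) m1 by (auto simp: abs_le_iff)
  have T1: "\<bar>u * (x - m) * tanh a\<bar> \<le> 1 * r * 1"
    using assms(3,5) abs_tanh_less_one[of a] by (intro abs_mult_le_mult) auto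
  have "\<bar>\<delta> * (u * x + v)\<bar> \<le> \<delta> * 3"
  proof -
    have "\<bar>u * x\<bar> \<le> 1 * 2"
      using assms(3) x2 by (intro abs_mult_le_mult)
    then have "\<bar>u * x + v\<bar> \<le> 3"
      using assms(4) by (auto simp: abs_le_iff)
    then show ?thesis
      using assms(7) by (simp add: abs_mult mult_left_mono)
  qed
  moreover have "\<bar>\<beta> * (x - m)\<bar> \<le> \<beta> * r"
    using assms(2,5) by (simp add: abs_mult)
  moreover have "a - (\<beta> * m + h) = \<beta> * (x - m) + \<delta> * (u * x + v)"
    unfolding a_def by (simp add: algebra_simps)
  ultimately have "\<bar>tanh a - tanh (\<beta> * m + h)\<bar> \<le> \<beta> * r + 3 * \<delta>"
    using tanh_lipschitz[of a "\<beta> * m + h"] by (auto simp: abs_le_iff)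
  then have "\<bar>tanh a - m\<bar> \<le> \<beta> * r + 3 * \<delta>"
    by (simp only: m[symmetric])
  moreover have "\<bar>u * m + v\<bar> \<le> 2"
    using abs_mult_le_mult[OF assms(3) m1] assms(4) by (auto simp: abs_le_iff)
  ultimately have T2: "\<bar>(u * m + v) * (tanh a - m)\<bar> \<le> 2 * (\<beta> * r + 3 * \<delta>)"
    by (intro abs_mult_le_mult)
  have "\<bar>x + m\<bar> \<le> 3"
    using x2 m1 by (auto simp: abs_le_iff)
  then have T3: "\<bar>u * (x - m) * (x + m)\<bar> \<le> 1 * r * 3"
    using assms(3,5) by (intro abs_mult_le_mult) auto
  have "(u * x + v) * tanh a - u * x\<^sup>2 / 2 - (u * m\<^sup>2 / 2 + v * m)
      = u * (x - m) * tanh a + (u * m + v) * (tanh a - m) - u * (x - m) * (x + m) / 2"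
    by (simp add: field_simps power2_eq_square)
  also have "\<dots> \<le> r + 2 * (\<beta> * r + 3 * \<delta>) + 3 * r / 2"
    using T1 T2 T3 unfolding abs_le_iff by linarith
  also have "\<dots> = (5/2 + 2 * \<beta>) * r + 6 * \<delta>"
    by (simp add: algebra_simps)
  finally show ?thesis
    unfolding a_def by simp
qed

lemma m0_obj_perturb_away:
  assumes hy: "cw_regime \<beta> h" and u: "\<bar>u\<bar> \<le> 1" and v: "\<bar>v\<bar> \<le> 1" and "r > 0"
  obtains \<delta>1 where "\<delta>1 > 0" "\<And>\<delta> x. 0 < \<delta> \<Longrightarrow> \<delta> < \<delta>1 \<Longrightarrow> r \<le> \<bar>x - m0 \<beta> h\<bar>
      \<Longrightarrow> m0_obj (\<beta> + \<delta> * u) (h + \<delta> * v) x \<le> m0_obj \<beta> h (m0 \<beta> h) - \<delta> * (3/2)"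
proof -
  let ?\<Phi> = "m0_obj \<beta> h (m0 \<beta> h)"
  have \<beta>: "\<beta> > 0"
    using hy unfolding cw_regime_def by simp
  have max: "m0_obj \<beta> h y \<le> ?\<Phi>" for y
    using m0_maximises[OF hy] unfolding maximises_m0_obj_def by blast
  obtain X where "X \<ge> 1" and far: "\<And>\<beta>' h' x. \<beta> / 2 \<le> \<beta>' \<Longrightarrow> \<beta>' \<le> 2 * \<beta>
      \<Longrightarrow> \<bar>h'\<bar> \<le> \<bar>h\<bar> + 1 \<Longrightarrow> X \<le> \<bar>x\<bar> \<Longrightarrow> m0_obj \<beta>' h' x \<le> ln 2 - 1"
    using m0_obj_small_far[OF \<beta>, of h] by blast
  obtain \<gamma> where "\<gamma> > 0" and gap: "\<And>x. r \<le> \<bar>x - m0 \<beta> h\<bar> \<Longrightarrow> m0_obj \<beta> h x \<le> ?\<Phi> - \<gamma>"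
    using m0_obj_gap[OF hy \<open>r > 0\<close>] by blast
  define K where "K = X + 1 + X\<^sup>2 / 2"
  have "K \<ge> 0"
    unfolding K_def using \<open>X \<ge> 1\<close> by simp
  show thesis
  proof (rule that)
    show "min (min (\<beta> / 2) (1 / 2)) (\<gamma> / (K + 3/2)) > 0"
      using \<beta> \<open>\<gamma> > 0\<close> \<open>K \<ge> 0\<close> by simp
    fix \<delta> x
    assume "0 < \<delta>" "\<delta> < min (min (\<beta> / 2) (1 / 2)) (\<gamma> / (K + 3/2))" and x: "r \<le> \<bar>x - m0 \<beta> h\<bar>"
    then have \<delta>: "0 < \<delta>" "\<delta> \<le> \<beta> / 2" "\<delta> \<le> 1 / 2" "\<delta> * (K + 3/2) \<le> \<gamma>"
      using \<open>K \<ge> 0\<close> pos_less_divide_eq[of "K + 3/2" \<delta> \<gamma>] by auto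
    show "m0_obj (\<beta> + \<delta> * u) (h + \<delta> * v) x \<le> ?\<Phi> - \<delta> * (3/2)"
    proof (cases "X \<le> \<bar>x\<bar>")
      case True
      have "\<bar>\<delta> * u\<bar> \<le> \<delta>" "\<bar>\<delta> * v\<bar> \<le> \<delta>"
        using u v \<delta>(1) by (auto simp: abs_mult mult_left_le)
      then have "m0_obj (\<beta> + \<delta> * u) (h + \<delta> * v) x \<le> ln 2 - 1"
        using \<delta>(2,3) True by (intro far) (auto simp: abs_le_iff)
      also have "ln 2 - 1 \<le> ?\<Phi> - \<delta> * (3/2)"
        using max[of 0] ln_two_le_m0_obj_zero[of \<beta> h] \<delta>(3) by simp
      finally show ?thesis .
    next
      case False
      have "(u * x + v) * tanh ((\<beta> + \<delta> * u) * x + (h + \<delta> * v)) - u * x\<^sup>2 / 2 \<le> K"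
        unfolding K_def using False by (intro perturbed_slope_bounded u v) simp
      then have "\<delta> * ((u * x + v) * tanh ((\<beta> + \<delta> * u) * x + (h + \<delta> * v)) - u * x\<^sup>2 / 2) \<le> \<delta> * K"
        using \<delta>(1) by (simp add: mult_left_mono)
      then have "m0_obj (\<beta> + \<delta> * u) (h + \<delta> * v) x \<le> m0_obj \<beta> h x + \<delta> * K"
        using m0_obj_perturb_le[of \<beta> \<delta> u h v x] by linarith
      then show ?thesis
        using gap[OF x] \<delta>(4) by (simp add: algebra_simps)
    qed
  qed
qed

lemma m0_obj_perturb:
  assumes hy: "cw_regime \<beta> h" and u: "\<bar>u\<bar> \<le> 1" and v: "\<bar>v\<bar> \<le> 1" and \<eta>: "\<eta> > 0"
  obtains \<delta>0 where "\<delta>0 > 0" "\<And>\<delta> x. 0 < \<delta> \<Longrightarrow> \<delta> < \<delta>0 \<Longrightarrow> m0_obj (\<beta> + \<delta> * u) (h + \<delta> * v) x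
      \<le> m0_obj \<beta> h (m0 \<beta> h) + \<delta> * (u * (m0 \<beta> h)\<^sup>2 / 2 + v * m0 \<beta> h + \<eta>)"
proof -
  define m where "m = m0 \<beta> h"
  define D where "D = u * m\<^sup>2 / 2 + v * m"
  have \<beta>: "\<beta> > 0"
    using hy unfolding cw_regime_def by simp
  have "\<bar>m\<bar> \<le> 1"
    unfolding m_def using abs_m0_less_one[OF hy] by simp
  moreover have "\<bar>m\<^sup>2\<bar> \<le> 1"
    using \<open>\<bar>m\<bar> \<le> 1\<close> by (simp add: abs_square_le_1)
  ultimately have D: "\<bar>D\<bar> \<le> 3/2"
    using abs_mult_le_mult[OF u, of "m\<^sup>2" 1] abs_mult_le_mult[OF v, of m 1]
    unfolding D_def abs_le_iff by linarith
  define r where "r = min 1 (\<eta> / (5 + 4 * \<beta>))"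
  have r: "0 < r" "r \<le> 1" "(5/2 + 2 * \<beta>) * r \<le> \<eta> / 2"
  proof -
    have "(5/2 + 2 * \<beta>) * r \<le> (5/2 + 2 * \<beta>) * (\<eta> / (5 + 4 * \<beta>))"
      unfolding r_def using \<beta> by (intro mult_left_mono) auto
    also have "\<dots> = \<eta> / 2"
      using \<beta> by (simp add: field_simps)
    finally show "(5/2 + 2 * \<beta>) * r \<le> \<eta> / 2" .
  qed (use \<beta> \<eta> in \<open>auto simp: r_def\<close>)
  obtain \<delta>1 where "\<delta>1 > 0" and away: "\<And>\<delta> x. 0 < \<delta> \<Longrightarrow> \<delta> < \<delta>1 \<Longrightarrow> r \<le> \<bar>x - m\<bar>
      \<Longrightarrow> m0_obj (\<beta> + \<delta> * u) (h + \<delta> * v) x \<le> m0_obj \<beta> h m - \<delta> * (3/2)"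
    using m0_obj_perturb_away[OF hy u v r(1)] unfolding m_def by blast
  show thesis
  proof (rule that)
    show "min \<delta>1 (\<eta> / 12) > 0"
      using \<open>\<delta>1 > 0\<close> \<eta> by simp
    fix \<delta> x
    assume "0 < \<delta>" "\<delta> < min \<delta>1 (\<eta> / 12)"
    then have \<delta>: "0 < \<delta>" "\<delta> < \<delta>1" "6 * \<delta> \<le> \<eta> / 2"
      by auto
    show "m0_obj (\<beta> + \<delta> * u) (h + \<delta> * v) x \<le> m0_obj \<beta> h (m0 \<beta> h) + \<delta> * (u * (m0 \<beta> h)\<^sup>2 / 2 + v * m0 \<beta> h + \<eta>)"
      unfolding m_def[symmetric] D_def[symmetric]
    proof (cases "r \<le> \<bar>x - m\<bar>")
      case True
      have "- (\<delta> * (3/2)) \<le> \<delta> * (D + \<eta>)"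
        using mult_left_mono[of "-3/2" "D + \<eta>" \<delta>] D \<eta> \<delta>(1) by simp
      then show "m0_obj (\<beta> + \<delta> * u) (h + \<delta> * v) x \<le> m0_obj \<beta> h m + \<delta> * (D + \<eta>)"
        using away[OF \<delta>(1,2) True] by linarith
    next
      case False
      have "(u * x + v) * tanh ((\<beta> + \<delta> * u) * x + (h + \<delta> * v)) - u * x\<^sup>2 / 2 \<le> D + \<eta>"
        using perturbed_slope_near_fixed_point[OF m0_fixed_point[OF hy] \<beta> u v _ r(2), of x \<delta>] False
          \<delta>(1,3) r(3) unfolding D_def m_def by simp
      then have "\<delta> * ((u * x + v) * tanh ((\<beta> + \<delta> * u) * x + (h + \<delta> * v)) - u * x\<^sup>2 / 2) \<le> \<delta> * (D + \<eta>)"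
        using \<delta>(1) by (simp add: mult_left_mono)
      then have "m0_obj (\<beta> + \<delta> * u) (h + \<delta> * v) x \<le> m0_obj \<beta> h x + \<delta> * (D + \<eta>)"
        using m0_obj_perturb_le[of \<beta> \<delta> u h v x] by linarith
      then show "m0_obj (\<beta> + \<delta> * u) (h + \<delta> * v) x \<le> m0_obj \<beta> h m + \<delta> * (D + \<eta>)"
        using m0_maximises[OF hy] unfolding maximises_m0_obj_def m_def by (meson add_le_cancel_right order_trans)
    qed
  qed
qed

section \<open>The variational functional of a law of columns\<close>

definition prob_weights :: "nat \<Rightarrow> ((nat \<Rightarrow> real) \<Rightarrow> real) \<Rightarrow> bool" where
  "prob_weights M w \<longleftrightarrow> (\<forall>c\<in>spins M. w c \<ge> 0) \<and> (\<Sum>c\<in>spins M. w c) = 1"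

definition g_weighted :: "nat \<Rightarrow> real \<Rightarrow> real \<Rightarrow> ((nat \<Rightarrow> real) \<Rightarrow> real) \<Rightarrow> (nat \<Rightarrow> real) \<Rightarrow> real" where
  "g_weighted M \<beta> lam w p = ln 2 - \<beta> * (\<Sum>\<mu><M. (p \<mu>)\<^sup>2) / 2
     + (\<Sum>c\<in>spins M. w c * ln (cosh (\<beta> * (\<Sum>\<mu><M. c \<mu> * p \<mu>) + lam)))"

definition sup_g_weighted :: "nat \<Rightarrow> real \<Rightarrow> real \<Rightarrow> ((nat \<Rightarrow> real) \<Rightarrow> real) \<Rightarrow> real" where
  "sup_g_weighted M \<beta> lam w = (SUP p\<in>({..<M} \<rightarrow>\<^sub>E (UNIV::real set)). g_weighted M \<beta> lam w p)"

lemma g_fun_eq_g_weighted: "g_fun M p \<beta> lam h = g_weighted M \<beta> lam (iid_prob (m0 \<beta> h) M) p"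
  unfolding g_fun_def g_weighted_def ..

lemma ln_cosh_pattern_le:
  assumes "c \<in> spins M" "\<beta> \<ge> 0"
  shows "ln (cosh (\<beta> * (\<Sum>\<mu><M. c \<mu> * p \<mu>) + lam)) \<le> \<beta> * (\<Sum>\<mu><M. \<bar>p \<mu>\<bar>) + \<bar>lam\<bar>"
proof -
  have "\<bar>\<Sum>\<mu><M. c \<mu> * p \<mu>\<bar> \<le> (\<Sum>\<mu><M. \<bar>c \<mu> * p \<mu>\<bar>)"
    by (rule sum_abs)
  also have "\<dots> = (\<Sum>\<mu><M. \<bar>p \<mu>\<bar>)"
    using assms(1) by (intro sum.cong refl) (auto simp: abs_mult spins_abs)
  finally have "\<beta> * \<bar>\<Sum>\<mu><M. c \<mu> * p \<mu>\<bar> \<le> \<beta> * (\<Sum>\<mu><M. \<bar>p \<mu>\<bar>)"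
    using assms(2) by (rule mult_left_mono)
  then have "\<bar>\<beta> * (\<Sum>\<mu><M. c \<mu> * p \<mu>) + lam\<bar> \<le> \<beta> * (\<Sum>\<mu><M. \<bar>p \<mu>\<bar>) + \<bar>lam\<bar>"
    using assms(2) abs_triangle_ineq[of "\<beta> * (\<Sum>\<mu><M. c \<mu> * p \<mu>)" lam] by (simp add: abs_mult)
  then show ?thesis
    using ln_cosh_le_abs order_trans by blast
qed

lemma weighted_sum_le:
  assumes "prob_weights M w" "\<And>c. c \<in> spins M \<Longrightarrow> f c \<le> (B::real)"
  shows "(\<Sum>c\<in>spins M. w c * f c) \<le> B"
proof -
  have "(\<Sum>c\<in>spins M. w c * f c) \<le> (\<Sum>c\<in>spins M. w c * B)"
    using assms unfolding prob_weights_def by (intro sum_mono mult_left_mono) auto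
  also have "\<dots> = B"
    using assms(1) unfolding prob_weights_def by (simp add: sum_distrib_right[symmetric])
  finally show ?thesis .
qed

lemma g_weighted_le_abs:
  assumes "prob_weights M w" "\<beta> \<ge> 0"
  shows "g_weighted M \<beta> lam w p
    \<le> ln 2 - \<beta> * (\<Sum>\<mu><M. (p \<mu>)\<^sup>2) / 2 + \<beta> * (\<Sum>\<mu><M. \<bar>p \<mu>\<bar>) + \<bar>lam\<bar>"
proof -
  have "(\<Sum>c\<in>spins M. w c * ln (cosh (\<beta> * (\<Sum>\<mu><M. c \<mu> * p \<mu>) + lam)))
      \<le> \<beta> * (\<Sum>\<mu><M. \<bar>p \<mu>\<bar>) + \<bar>lam\<bar>"
    by (intro weighted_sum_le[OF assms(1)] ln_cosh_pattern_le[OF _ assms(2)])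
  then show ?thesis
    unfolding g_weighted_def by simp
qed

lemma g_weighted_le:
  assumes "prob_weights M w" "\<beta> \<ge> 0"
  shows "g_weighted M \<beta> lam w p \<le> ln 2 + \<beta> * real M / 2 + \<bar>lam\<bar>"
proof -
  have "(\<Sum>\<mu><M. \<bar>p \<mu>\<bar> - (p \<mu>)\<^sup>2 / 2) \<le> (\<Sum>\<mu><M. 1 / 2)"
  proof (intro sum_mono)
    fix \<mu>
    have "0 \<le> (\<bar>p \<mu>\<bar> - 1)\<^sup>2"
      by simp
    then show "\<bar>p \<mu>\<bar> - (p \<mu>)\<^sup>2 / 2 \<le> 1 / 2"
      by (simp add: power2_eq_square algebra_simps)
  qed
  then have "\<beta> * ((\<Sum>\<mu><M. \<bar>p \<mu>\<bar>) - (\<Sum>\<mu><M. (p \<mu>)\<^sup>2) / 2) \<le> \<beta> * (real M / 2)"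
    using assms(2) by (intro mult_left_mono) (auto simp: sum_subtractf sum_divide_distrib[symmetric])
  then show ?thesis
    using g_weighted_le_abs[OF assms, of lam p] by (simp add: algebra_simps)
qed

lemma ln_two_le_g_weighted_zero:
  assumes "prob_weights M w"
  shows "ln 2 \<le> g_weighted M \<beta> lam w (\<lambda>\<mu>\<in>{..<M}. 0)"
proof -
  have "0 \<le> (\<Sum>c\<in>spins M. w c * ln (cosh (\<beta> * (\<Sum>\<mu><M. c \<mu> * (\<lambda>\<mu>\<in>{..<M}. 0) \<mu>) + lam)))"
    using assms unfolding prob_weights_def by (intro sum_nonneg mult_nonneg_nonneg ln_cosh_nonneg) auto
  then show ?thesis
    unfolding g_weighted_def by simp
qed

text \<open>Only arguments with \<open>g \<ge> ln 2\<close> matter for the supremum, and these are bounded.\<close>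

lemma g_weighted_large_imp_bounded:
  assumes "prob_weights M w" "\<beta> \<ge> 0" "ln 2 \<le> g_weighted M \<beta> lam w p"
  shows "\<beta> * (\<Sum>\<mu><M. \<bar>p \<mu>\<bar>) \<le> 2 * \<beta> * real M + \<bar>lam\<bar>"
proof -
  have "(\<Sum>\<mu><M. \<bar>p \<mu>\<bar> - (p \<mu>)\<^sup>2 / 4) \<le> (\<Sum>\<mu><M. 1)"
  proof (intro sum_mono)
    fix \<mu>
    have "0 \<le> (\<bar>p \<mu>\<bar> - 2)\<^sup>2"
      by simp
    then show "\<bar>p \<mu>\<bar> - (p \<mu>)\<^sup>2 / 4 \<le> 1"
      by (simp add: power2_eq_square algebra_simps)
  qed
  then have "\<beta> * ((\<Sum>\<mu><M. \<bar>p \<mu>\<bar>) - (\<Sum>\<mu><M. (p \<mu>)\<^sup>2) / 4) \<le> \<beta> * real M"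
    using assms(2) by (intro mult_left_mono) (auto simp: sum_subtractf sum_divide_distrib[symmetric])
  then show ?thesis
    using g_weighted_le_abs[OF assms(1,2), of lam p] assms(3) by (simp add: algebra_simps)
qed

lemma bdd_above_g_weighted: "prob_weights M w \<Longrightarrow> \<beta> \<ge> 0 \<Longrightarrow> bdd_above (g_weighted M \<beta> lam w ` A)"
  by (rule bdd_aboveI[where M = "ln 2 + \<beta> * real M / 2 + \<bar>lam\<bar>"]) (auto intro: g_weighted_le)

lemma g_weighted_le_sup:
  assumes "prob_weights M w" "\<beta> \<ge> 0" "p \<in> {..<M} \<rightarrow>\<^sub>E UNIV"
  shows "g_weighted M \<beta> lam w p \<le> sup_g_weighted M \<beta> lam w"
  unfolding sup_g_weighted_def by (rule cSUP_upper[OF assms(3) bdd_above_g_weighted[OF assms(1,2)]])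

lemma ln_two_le_sup_g_weighted:
  assumes "prob_weights M w" "\<beta> \<ge> 0"
  shows "ln 2 \<le> sup_g_weighted M \<beta> lam w"
proof -
  have "(\<lambda>\<mu>\<in>{..<M}. 0::real) \<in> {..<M} \<rightarrow>\<^sub>E UNIV"
    by simp
  then show ?thesis
    using ln_two_le_g_weighted_zero[OF assms(1)] g_weighted_le_sup[OF assms] by (meson order_trans)
qed

lemma sup_g_weighted_le_add:
  assumes w: "prob_weights M w" and w': "prob_weights M w'" and \<beta>: "\<beta> \<ge> 0"
  shows "sup_g_weighted M \<beta> lam w
    \<le> sup_g_weighted M \<beta> lam w' + (2 * \<beta> * real M + 2 * \<bar>lam\<bar>) * (\<Sum>c\<in>spins M. \<bar>w c - w' c\<bar>)"
proof -
  let ?K = "2 * \<beta> * real M + 2 * \<bar>lam\<bar>" and ?D = "\<Sum>c\<in>spins M. \<bar>w c - w' c\<bar>"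
  have "?K * ?D \<ge> 0"
    using \<beta> by (simp add: sum_nonneg)
  have "g_weighted M \<beta> lam w p \<le> sup_g_weighted M \<beta> lam w' + ?K * ?D" if p: "p \<in> {..<M} \<rightarrow>\<^sub>E UNIV" for p
  proof (cases "ln 2 \<le> g_weighted M \<beta> lam w p")
    case False
    then show ?thesis
      using ln_two_le_sup_g_weighted[OF w' \<beta>, of lam] \<open>?K * ?D \<ge> 0\<close> by linarith
  next
    case True
    let ?L = "\<lambda>c. ln (cosh (\<beta> * (\<Sum>\<mu><M. c \<mu> * p \<mu>) + lam))"
    have L: "\<bar>?L c\<bar> \<le> ?K" if "c \<in> spins M" for c
      using ln_cosh_pattern_le[OF that \<beta>, of p lam] ln_cosh_nonneg
        g_weighted_large_imp_bounded[OF w \<beta> True] by (simp add: abs_le_iff)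
    have "g_weighted M \<beta> lam w p - g_weighted M \<beta> lam w' p = (\<Sum>c\<in>spins M. (w c - w' c) * ?L c)"
      unfolding g_weighted_def by (simp add: sum_subtractf left_diff_distrib)
    also have "\<dots> \<le> (\<Sum>c\<in>spins M. \<bar>w c - w' c\<bar> * ?K)"
    proof (intro sum_mono)
      fix c
      assume "c \<in> spins M"
      then have "\<bar>(w c - w' c) * ?L c\<bar> \<le> \<bar>w c - w' c\<bar> * ?K"
        by (intro abs_mult_le_mult[OF order_refl L])
      then show "(w c - w' c) * ?L c \<le> \<bar>w c - w' c\<bar> * ?K"
        by simp
    qed
    also have "\<dots> = ?K * ?D"
      by (simp add: sum_distrib_right mult.commute)
    finally show ?thesis
      using g_weighted_le_sup[OF w' \<beta> p, of lam] by simp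
  qed
  then show ?thesis
    unfolding sup_g_weighted_def[of M \<beta> lam w] by (intro cSUP_least) (auto simp: PiE_eq_empty_iff)
qed

lemma sup_g_weighted_lipschitz:
  assumes "prob_weights M w" "prob_weights M w'" "\<beta> \<ge> 0"
  shows "\<bar>sup_g_weighted M \<beta> lam w - sup_g_weighted M \<beta> lam w'\<bar>
    \<le> (2 * \<beta> * real M + 2 * \<bar>lam\<bar>) * (\<Sum>c\<in>spins M. \<bar>w c - w' c\<bar>)"
  using sup_g_weighted_le_add[OF assms, of lam] sup_g_weighted_le_add[OF assms(2,1,3), of lam]
  by (simp add: abs_le_iff abs_minus_commute)

definition product_law :: "nat \<Rightarrow> (nat \<Rightarrow> real) \<Rightarrow> (nat \<Rightarrow> real) \<Rightarrow> real" where
  "product_law M a c = (\<Prod>\<mu><M. (1 + a \<mu> * c \<mu>) / 2)"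

definition column_law :: "nat \<Rightarrow> nat \<Rightarrow> (nat \<Rightarrow> nat \<Rightarrow> real) \<Rightarrow> (nat \<Rightarrow> real) \<Rightarrow> real" where
  "column_law M N S c = (\<Sum>i<N. product_law M (\<lambda>\<mu>. S \<mu> i) c) / real N"

lemma iid_prob_eq_product_law: "iid_prob m M = product_law M (\<lambda>_. m)"
  unfolding iid_prob_def product_law_def ..

lemma product_law_nonneg:
  assumes "\<And>\<mu>. \<mu> < M \<Longrightarrow> \<bar>a \<mu>\<bar> \<le> 1" "c \<in> spins M"
  shows "product_law M a c \<ge> 0"
proof -
  have "0 \<le> (1 + a \<mu> * c \<mu>) / 2" if "\<mu> < M" for \<mu>
    using assms(1)[OF that] spins_values[OF assms(2) that] by (auto simp: abs_le_iff)
  then show ?thesis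
    unfolding product_law_def by (intro prod_nonneg) auto
qed

lemma sum_product_law: "(\<Sum>c\<in>spins M. product_law M a c) = 1"
proof -
  have "(\<Sum>c\<in>spins M. product_law M a c) = (\<Prod>\<mu><M. \<Sum>y\<in>{-1,1::real}. (1 + a \<mu> * y) / 2)"
    unfolding product_law_def spins_def by (rule prod_sum_PiE[symmetric]) auto
  also have "\<dots> = 1"
    by (simp add: add_divide_distrib[symmetric])
  finally show ?thesis .
qed

lemma prob_weights_product_law:
  "(\<And>\<mu>. \<mu> < M \<Longrightarrow> \<bar>a \<mu>\<bar> \<le> 1) \<Longrightarrow> prob_weights M (product_law M a)"
  unfolding prob_weights_def using product_law_nonneg sum_product_law by blast

lemma product_law_pm1:
  assumes "c \<in> spins M" "\<And>\<mu>. \<mu> < M \<Longrightarrow> x \<mu> = -1 \<or> x \<mu> = 1"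
  shows "product_law M x c = (if c = restrict x {..<M} then 1 else 0)"
proof (cases "c = restrict x {..<M}")
  case True
  then have "(1 + x \<mu> * c \<mu>) / 2 = 1" if "\<mu> < M" for \<mu>
    using assms(2)[OF that] that by auto
  with True show ?thesis
    unfolding product_law_def by simp
next
  case False
  then obtain \<mu> where "\<mu> < M" "c \<mu> \<noteq> x \<mu>"
    using assms(1) unfolding spins_def by (auto simp: fun_eq_iff PiE_iff extensional_def split: if_splits)
  then have "(1 + x \<mu> * c \<mu>) / 2 = 0"
    using assms(2)[of \<mu>] spins_values[OF assms(1)] by fastforce
  then have "product_law M x c = 0"
    unfolding product_law_def using \<open>\<mu> < M\<close> by (intro prod_zero bexI[of _ \<mu>]) auto
  with False show ?thesis
    by simp
qed

lemma sum_product_law_pm1: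
  assumes "\<And>\<mu>. \<mu> < M \<Longrightarrow> x \<mu> = -1 \<or> x \<mu> = 1"
  shows "(\<Sum>c\<in>spins M. product_law M x c * g c) = g (restrict x {..<M})"
proof -
  have "restrict x {..<M} \<in> spins M"
    using assms unfolding spins_def by auto
  have "(\<Sum>c\<in>spins M. product_law M x c * g c) = (\<Sum>c\<in>spins M. if c = restrict x {..<M} then g c else 0)"
    using product_law_pm1[OF _ assms] by (intro sum.cong) auto
  also have "\<dots> = g (restrict x {..<M})"
    using \<open>restrict x {..<M} \<in> spins M\<close> finite_spins by (simp add: sum.delta')
  finally show ?thesis .
qed

lemma prob_weights_column_law:
  assumes "S \<in> training_sets M N" "N \<ge> 1"
  shows "prob_weights M (column_law M N S)"
  unfolding prob_weights_def
proof
  have "\<bar>S \<mu> i\<bar> \<le> 1" if "\<mu> < M" "i < N" for \<mu> i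
    using training_sets_values[OF assms(1) that] by auto
  then show "\<forall>c\<in>spins M. 0 \<le> column_law M N S c"
    unfolding column_law_def by (auto intro!: divide_nonneg_nonneg sum_nonneg product_law_nonneg)
  have "(\<Sum>c\<in>spins M. column_law M N S c) = (\<Sum>i<N. \<Sum>c\<in>spins M. product_law M (\<lambda>\<mu>. S \<mu> i) c) / real N"
    unfolding column_law_def by (simp add: sum_divide_distrib[symmetric] sum.swap[of _ "spins M"])
  with assms(2) show "(\<Sum>c\<in>spins M. column_law M N S c) = 1"
    by (simp add: sum_product_law)
qed

section \<open>Laplace bounds for the partition function\<close>

definition overlap :: "nat \<Rightarrow> (nat \<Rightarrow> nat \<Rightarrow> real) \<Rightarrow> nat \<Rightarrow> (nat \<Rightarrow> real) \<Rightarrow> real" where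
  "overlap N S \<mu> \<xi> = (\<Sum>i<N. S \<mu> i * \<xi> i)"

definition overlap_vector :: "nat \<Rightarrow> nat \<Rightarrow> (nat \<Rightarrow> nat \<Rightarrow> real) \<Rightarrow> (nat \<Rightarrow> real) \<Rightarrow> nat \<Rightarrow> real" where
  "overlap_vector M N S \<xi> = (\<lambda>\<mu>\<in>{..<M}. overlap N S \<mu> \<xi> / real N)"

definition empirical_g :: "nat \<Rightarrow> nat \<Rightarrow> (nat \<Rightarrow> nat \<Rightarrow> real) \<Rightarrow> real \<Rightarrow> real \<Rightarrow> (nat \<Rightarrow> real) \<Rightarrow> real" where
  "empirical_g M N S \<beta> lam p = ln 2 - \<beta> * (\<Sum>\<mu><M. (p \<mu>)\<^sup>2) / 2
      + (\<Sum>i<N. ln (cosh (\<beta> * (\<Sum>\<mu><M. S \<mu> i * p \<mu>) + lam))) / real N"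

definition overlap_exponent :: "nat \<Rightarrow> nat \<Rightarrow> (nat \<Rightarrow> nat \<Rightarrow> real) \<Rightarrow> real \<Rightarrow> real \<Rightarrow> (nat \<Rightarrow> real) \<Rightarrow> real" where
  "overlap_exponent M N S \<beta> lam \<xi> =
     \<beta> / (2 * real N) * (\<Sum>\<mu><M. (overlap N S \<mu> \<xi>)\<^sup>2) + lam * (\<Sum>i<N. \<xi> i)"

text \<open>Linearising the square in \<open>overlap_exponent\<close> around \<open>q\<close> (a discrete Hubbard--Stratonovich
  transform): the sum over \<open>\<xi>\<close> then factorises over the sites.\<close>

definition tilted_exponent ::
    "nat \<Rightarrow> nat \<Rightarrow> (nat \<Rightarrow> nat \<Rightarrow> real) \<Rightarrow> real \<Rightarrow> real \<Rightarrow> (nat \<Rightarrow> real) \<Rightarrow> (nat \<Rightarrow> real) \<Rightarrow> real" where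
  "tilted_exponent M N S \<beta> lam q \<xi> = \<beta> * (\<Sum>\<mu><M. q \<mu> * overlap N S \<mu> \<xi>)
     - real N * \<beta> * (\<Sum>\<mu><M. (q \<mu>)\<^sup>2) / 2 + lam * (\<Sum>i<N. \<xi> i)"

lemma empirical_g_eq_g_weighted:
  assumes "S \<in> training_sets M N"
  shows "empirical_g M N S \<beta> lam p = g_weighted M \<beta> lam (column_law M N S) p"
proof -
  let ?L = "\<lambda>c. ln (cosh (\<beta> * (\<Sum>\<mu><M. c \<mu> * p \<mu>) + lam))"
  have "(\<Sum>c\<in>spins M. column_law M N S c * ?L c)
      = (\<Sum>i<N. \<Sum>c\<in>spins M. product_law M (\<lambda>\<mu>. S \<mu> i) c * ?L c) / real N"
    unfolding column_law_def
    by (simp add: sum_divide_distrib[symmetric] sum_distrib_right sum.swap[of _ "spins M"])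
  also have "\<dots> = (\<Sum>i<N. ?L (restrict (\<lambda>\<mu>. S \<mu> i) {..<M})) / real N"
    using sum_product_law_pm1 training_sets_values[OF assms] by simp
  finally show ?thesis
    unfolding empirical_g_def g_weighted_def by simp
qed

lemma sum_lower_pairs_overlap:
  assumes "S \<in> training_sets M N" "\<mu> < M" "\<xi> \<in> spins N"
  shows "(\<Sum>j<N. \<Sum>i<j. S \<mu> i * S \<mu> j * \<xi> i * \<xi> j) = ((overlap N S \<mu> \<xi>)\<^sup>2 - real N) / 2"
proof -
  have "(S \<mu> i * \<xi> i)\<^sup>2 = 1" if "i < N" for i
    using training_sets_values[OF assms(1,2) that] spins_values[OF assms(3) that] by auto
  then have "(\<Sum>i<N. (S \<mu> i * \<xi> i)\<^sup>2) = real N"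
    by simp
  then show ?thesis
    using sum_lower_pairs[where x = "\<lambda>i. S \<mu> i * \<xi> i"] unfolding overlap_def by (simp add: mult_ac)
qed

lemma Zpart_eq:
  assumes "S \<in> training_sets M N" "N \<ge> 1"
  shows "Zpart N S \<beta> lam M = exp (- \<beta> * real M / 2) * (\<Sum>\<xi>\<in>spins N. exp (overlap_exponent M N S \<beta> lam \<xi>))"
proof -
  have "\<beta> / real N * (\<Sum>\<mu><M. \<Sum>j<N. \<Sum>i<j. S \<mu> i * S \<mu> j * \<xi> i * \<xi> j) + lam * (\<Sum>i<N. \<xi> i)
      = - \<beta> * real M / 2 + overlap_exponent M N S \<beta> lam \<xi>" if "\<xi> \<in> spins N" for \<xi>
  proof -
    have "(\<Sum>\<mu><M. \<Sum>j<N. \<Sum>i<j. S \<mu> i * S \<mu> j * \<xi> i * \<xi> j)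
        = (\<Sum>\<mu><M. ((overlap N S \<mu> \<xi>)\<^sup>2 - real N) / 2)"
      by (intro sum.cong refl sum_lower_pairs_overlap[OF assms(1) _ that]) simp
    also have "\<dots> = (\<Sum>\<mu><M. (overlap N S \<mu> \<xi>)\<^sup>2) / 2 - real M * real N / 2"
      by (simp add: sum_subtractf sum_divide_distrib[symmetric])
    finally have pairs: "(\<Sum>\<mu><M. \<Sum>j<N. \<Sum>i<j. S \<mu> i * S \<mu> j * \<xi> i * \<xi> j)
        = (\<Sum>\<mu><M. (overlap N S \<mu> \<xi>)\<^sup>2) / 2 - real M * real N / 2" .
    show ?thesis
      unfolding overlap_exponent_def pairs using assms(2) by (simp add: field_simps)
  qed
  then show ?thesis
    unfolding Zpart_def by (simp add: sum_distrib_left exp_add[symmetric])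
qed

lemma tilted_exponent_le:
  assumes "N \<ge> 1" "\<beta> \<ge> 0"
  shows "tilted_exponent M N S \<beta> lam q \<xi> \<le> overlap_exponent M N S \<beta> lam \<xi>"
proof -
  have "\<beta> * q \<mu> * w - real N * \<beta> * (q \<mu>)\<^sup>2 / 2 \<le> \<beta> / (2 * real N) * w\<^sup>2" for \<mu> and w :: real
  proof -
    have "0 \<le> \<beta> / (2 * real N) * (w - real N * q \<mu>)\<^sup>2"
      using assms by simp
    with assms(1) show ?thesis
      by (simp add: power2_eq_square field_simps)
  qed
  then have "(\<Sum>\<mu><M. \<beta> * q \<mu> * overlap N S \<mu> \<xi> - real N * \<beta> * (q \<mu>)\<^sup>2 / 2)
      \<le> (\<Sum>\<mu><M. \<beta> / (2 * real N) * (overlap N S \<mu> \<xi>)\<^sup>2)"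
    by (intro sum_mono)
  then show ?thesis
    unfolding tilted_exponent_def overlap_exponent_def
    by (simp add: sum_subtractf sum_distrib_left sum_divide_distrib[symmetric] mult_ac)
qed

lemma tilted_exponent_overlap_vector:
  assumes "N \<ge> 1"
  shows "tilted_exponent M N S \<beta> lam (overlap_vector M N S \<xi>) \<xi> = overlap_exponent M N S \<beta> lam \<xi>"
proof -
  have "(\<Sum>\<mu><M. \<beta> * overlap_vector M N S \<xi> \<mu> * overlap N S \<mu> \<xi>
        - real N * \<beta> * (overlap_vector M N S \<xi> \<mu>)\<^sup>2 / 2)
      = (\<Sum>\<mu><M. \<beta> / (2 * real N) * (overlap N S \<mu> \<xi>)\<^sup>2)"
    using assms by (intro sum.cong refl) (simp add: overlap_vector_def power2_eq_square field_simps)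
  then show ?thesis
    unfolding tilted_exponent_def overlap_exponent_def
    by (simp add: sum_subtractf sum_distrib_left sum_divide_distrib[symmetric] mult_ac)
qed

lemma sum_exp_tilted_exponent:
  assumes "N \<ge> 1"
  shows "(\<Sum>\<xi>\<in>spins N. exp (tilted_exponent M N S \<beta> lam q \<xi>)) = exp (real N * empirical_g M N S \<beta> lam q)"
proof -
  define t where "t i = \<beta> * (\<Sum>\<mu><M. S \<mu> i * q \<mu>) + lam" for i
  define c where "c = real N * \<beta> * (\<Sum>\<mu><M. (q \<mu>)\<^sup>2) / 2"
  have tilted: "tilted_exponent M N S \<beta> lam q \<xi> = (\<Sum>i<N. \<xi> i * t i) - c" for \<xi>
  proof -
    have "(\<Sum>\<mu><M. q \<mu> * overlap N S \<mu> \<xi>) = (\<Sum>i<N. \<xi> i * (\<Sum>\<mu><M. S \<mu> i * q \<mu>))"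
      unfolding overlap_def by (simp add: sum_distrib_left sum.swap[of _ "{..<M}"] mult_ac)
    then show ?thesis
      unfolding tilted_exponent_def t_def c_def
      by (simp add: distrib_left sum.distrib sum_distrib_left mult_ac)
  qed
  have "exp (tilted_exponent M N S \<beta> lam q \<xi>) = exp (- c) * exp (\<Sum>i<N. \<xi> i * t i)" for \<xi>
    unfolding tilted by (simp add: mult_exp_exp)
  then have "(\<Sum>\<xi>\<in>spins N. exp (tilted_exponent M N S \<beta> lam q \<xi>))
      = exp (- c) * (\<Sum>\<xi>\<in>spins N. exp (\<Sum>i<N. \<xi> i * t i))"
    by (simp add: sum_distrib_left)
  also have "\<dots> = exp (- c) * (\<Prod>i<N. 2 * cosh (t i))"
    by (simp add: sum_spins_exp)
  also have "(\<Prod>i<N. 2 * cosh (t i)) = exp (\<Sum>i<N. ln 2 + ln (cosh (t i)))"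
    by (simp add: exp_sum exp_add)
  also have "(\<Sum>i<N. ln 2 + ln (cosh (t i))) = real N * ln 2 + (\<Sum>i<N. ln (cosh (t i)))"
    by (simp add: sum.distrib)
  also have "exp (- c) * exp (real N * ln 2 + (\<Sum>i<N. ln (cosh (t i))))
      = exp (real N * empirical_g M N S \<beta> lam q)"
    unfolding mult_exp_exp empirical_g_def t_def c_def using assms by (simp add: field_simps)
  finally show ?thesis .
qed

lemma Zpart_pos: "Zpart N S \<beta> lam M > 0"
  unfolding Zpart_def using finite_spins spins_nonempty by (intro sum_pos) auto

lemma overlap_integer:
  assumes "S \<in> training_sets M N" "\<xi> \<in> spins N" "\<mu> < M"
  obtains k :: int where "overlap N S \<mu> \<xi> = of_int k" "\<bar>k\<bar> \<le> int N"
proof -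
  have pm1: "S \<mu> i * \<xi> i \<in> {-1, 1}" if "i < N" for i
    using training_sets_values[OF assms(1,3) that] spins_values[OF assms(2) that] by auto
  have "overlap N S \<mu> \<xi> \<in> \<int>"
    unfolding overlap_def
  proof (intro Ints_sum)
    fix i
    assume "i \<in> {..<N}"
    with pm1[of i] show "S \<mu> i * \<xi> i \<in> \<int>"
      by auto
  qed
  then obtain k where k: "overlap N S \<mu> \<xi> = of_int k"
    by (auto elim: Ints_cases)
  have "\<bar>overlap N S \<mu> \<xi>\<bar> \<le> (\<Sum>i<N. \<bar>S \<mu> i * \<xi> i\<bar>)"
    unfolding overlap_def by (rule sum_abs)
  also have "\<dots> = real N"
  proof -
    have "\<bar>S \<mu> i * \<xi> i\<bar> = 1" if "i < N" for i
      using pm1[OF that] by auto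
    then show ?thesis
      by simp
  qed
  finally have "\<bar>k\<bar> \<le> int N"
    using k by linarith
  with k show thesis
    using that by blast
qed

lemma card_overlap_vectors_le:
  assumes "S \<in> training_sets M N"
  shows "card (overlap_vector M N S ` spins N) \<le> (2 * N + 1) ^ M"
proof -
  define B where "B = (\<lambda>k::int. of_int k / real N) ` {- int N..int N}"
  have "overlap_vector M N S ` spins N \<subseteq> {..<M} \<rightarrow>\<^sub>E B"
  proof (clarsimp simp: overlap_vector_def)
    fix \<xi> \<mu>
    assume "\<xi> \<in> spins N" "\<mu> < M"
    then obtain k :: int where "overlap N S \<mu> \<xi> = of_int k" "\<bar>k\<bar> \<le> int N"
      using overlap_integer[OF assms] by blast
    then show "overlap N S \<mu> \<xi> / real N \<in> B"
      unfolding B_def by (auto simp: abs_le_iff)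
  qed
  then have "card (overlap_vector M N S ` spins N) \<le> card ({..<M} \<rightarrow>\<^sub>E B)"
    unfolding B_def by (intro card_mono finite_PiE) auto
  also have "\<dots> = card B ^ M"
    by (simp add: card_PiE)
  also have "card B \<le> card {- int N..int N}"
    unfolding B_def by (rule card_image_le) simp
  also have "\<dots> = 2 * N + 1"
    by simp
  finally show ?thesis
    by (simp add: power_mono)
qed

lemma ln_Zpart_lower:
  assumes "S \<in> training_sets M N" "N \<ge> 1" "\<beta> \<ge> 0"
  shows "sup_g_weighted M \<beta> lam (column_law M N S) - \<beta> * real M / (2 * real N)
    \<le> ln (Zpart N S \<beta> lam M) / real N"
proof -
  have "g_weighted M \<beta> lam (column_law M N S) q \<le> (ln (Zpart N S \<beta> lam M) + \<beta> * real M / 2) / real N" for q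
  proof -
    have "exp (real N * empirical_g M N S \<beta> lam q) \<le> (\<Sum>\<xi>\<in>spins N. exp (overlap_exponent M N S \<beta> lam \<xi>))"
      unfolding sum_exp_tilted_exponent[OF assms(2), symmetric]
      by (intro sum_mono) (simp add: tilted_exponent_le[OF assms(2,3)])
    also have "\<dots> = exp (\<beta> * real M / 2) * Zpart N S \<beta> lam M"
      unfolding Zpart_eq[OF assms(1,2)] by (simp add: mult.assoc[symmetric] mult_exp_exp)
    also have "\<dots> = exp (\<beta> * real M / 2 + ln (Zpart N S \<beta> lam M))"
      using Zpart_pos by (simp add: exp_add)
    finally have "real N * empirical_g M N S \<beta> lam q \<le> \<beta> * real M / 2 + ln (Zpart N S \<beta> lam M)"
      by simp
    then show ?thesis
      using assms(2) empirical_g_eq_g_weighted[OF assms(1)] by (simp add: field_simps)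
  qed
  then have "sup_g_weighted M \<beta> lam (column_law M N S) \<le> (ln (Zpart N S \<beta> lam M) + \<beta> * real M / 2) / real N"
    unfolding sup_g_weighted_def by (intro cSUP_least) (auto simp: PiE_eq_empty_iff)
  also have "\<dots> = ln (Zpart N S \<beta> lam M) / real N + \<beta> * real M / (2 * real N)"
    by (simp add: add_divide_distrib)
  finally show ?thesis
    by simp
qed

text \<open>Each \<open>\<xi>\<close> is dominated by its own tilt, at its overlap vector, and there are only
  polynomially many overlap vectors.\<close>

lemma sum_exp_overlap_exponent_le:
  assumes "S \<in> training_sets M N" "N \<ge> 1" "\<beta> \<ge> 0"
  shows "(\<Sum>\<xi>\<in>spins N. exp (overlap_exponent M N S \<beta> lam \<xi>))
    \<le> (2 * real N + 1) ^ M * exp (real N * sup_g_weighted M \<beta> lam (column_law M N S))"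
proof -
  let ?F = "sup_g_weighted M \<beta> lam (column_law M N S)" and ?Q = "overlap_vector M N S ` spins N"
  have "(\<Sum>\<xi>\<in>spins N. exp (overlap_exponent M N S \<beta> lam \<xi>))
      = (\<Sum>\<xi>\<in>spins N. exp (tilted_exponent M N S \<beta> lam (overlap_vector M N S \<xi>) \<xi>))"
    by (simp add: tilted_exponent_overlap_vector[OF assms(2)])
  also have "\<dots> \<le> (\<Sum>\<xi>\<in>spins N. \<Sum>q\<in>?Q. exp (tilted_exponent M N S \<beta> lam q \<xi>))"
    using finite_spins by (intro sum_mono member_le_sum) auto
  also have "\<dots> = (\<Sum>q\<in>?Q. exp (real N * empirical_g M N S \<beta> lam q))"
    by (subst sum.swap) (simp add: sum_exp_tilted_exponent[OF assms(2)])
  also have "\<dots> \<le> (\<Sum>q\<in>?Q. exp (real N * ?F))"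
  proof (intro sum_mono)
    fix q
    assume "q \<in> ?Q"
    then obtain \<xi> where "q = overlap_vector M N S \<xi>"
      by blast
    then have "q \<in> {..<M} \<rightarrow>\<^sub>E UNIV"
      unfolding overlap_vector_def by (simp only: restrict_PiE_iff) simp
    then have "empirical_g M N S \<beta> lam q \<le> ?F"
      unfolding empirical_g_eq_g_weighted[OF assms(1)]
      by (rule g_weighted_le_sup[OF prob_weights_column_law[OF assms(1,2)] assms(3)])
    then show "exp (real N * empirical_g M N S \<beta> lam q) \<le> exp (real N * ?F)"
      using assms(2) by simp
  qed
  also have "\<dots> \<le> (2 * real N + 1) ^ M * exp (real N * ?F)"
  proof -
    have "real (card ?Q) \<le> real ((2 * N + 1) ^ M)"
      using card_overlap_vectors_le[OF assms(1)] by (rule of_nat_mono)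
    then show ?thesis
      by (simp add: mult_right_mono add.commute)
  qed
  finally show ?thesis .
qed

lemma ln_Zpart_upper:
  assumes "S \<in> training_sets M N" "N \<ge> 1" "\<beta> \<ge> 0"
  shows "ln (Zpart N S \<beta> lam M) / real N \<le> sup_g_weighted M \<beta> lam (column_law M N S)
    - \<beta> * real M / (2 * real N) + real M * ln (2 * real N + 1) / real N"
proof -
  let ?F = "sup_g_weighted M \<beta> lam (column_law M N S)"
  have "Zpart N S \<beta> lam M \<le> exp (- \<beta> * real M / 2) * ((2 * real N + 1) ^ M * exp (real N * ?F))"
    unfolding Zpart_eq[OF assms(1,2)] using sum_exp_overlap_exponent_le[OF assms] by simp
  also have "\<dots> = exp (- \<beta> * real M / 2) * (exp (real M * ln (2 * real N + 1)) * exp (real N * ?F))"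
    by (simp add: exp_of_nat_mult)
  also have "\<dots> = exp (real M * ln (2 * real N + 1) + real N * ?F - \<beta> * real M / 2)"
    by (simp add: mult_exp_exp)
  finally have "ln (Zpart N S \<beta> lam M) \<le> ln (exp (real M * ln (2 * real N + 1) + real N * ?F - \<beta> * real M / 2))"
    using Zpart_pos by (subst ln_le_cancel_iff) auto
  then have "ln (Zpart N S \<beta> lam M) \<le> real M * ln (2 * real N + 1) + real N * ?F - \<beta> * real M / 2"
    by simp
  with assms(2) show ?thesis
    by (simp add: field_simps)
qed

definition laplace_error :: "nat \<Rightarrow> real \<Rightarrow> nat \<Rightarrow> real" where
  "laplace_error M \<beta> N = \<beta> * real M / (2 * real N) + real M * ln (2 * real N + 1) / real N"

lemma laplace_error_tendsto_zero: "laplace_error M \<beta> \<longlonglongrightarrow> 0"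
  unfolding laplace_error_def by real_asymp

lemma ln_Zpart_approx:
  assumes "S \<in> training_sets M N" "N \<ge> 1" "\<beta> \<ge> 0"
  shows "\<bar>ln (Zpart N S \<beta> lam M) / real N - sup_g_weighted M \<beta> lam (column_law M N S)\<bar>
    \<le> laplace_error M \<beta> N"
proof -
  have "0 \<le> \<beta> * real M / (2 * real N)" "0 \<le> real M * ln (2 * real N + 1) / real N"
    using assms(3) by simp_all
  then show ?thesis
    using ln_Zpart_lower[OF assms, of lam] ln_Zpart_upper[OF assms, of lam]
    unfolding abs_le_iff laplace_error_def by linarith
qed

definition cw_expect :: "real \<Rightarrow> real \<Rightarrow> nat \<Rightarrow> ((nat \<Rightarrow> real) \<Rightarrow> real) \<Rightarrow> real" where
  "cw_expect \<beta> h N f = (\<Sum>s\<in>spins N. cw_weight \<beta> h N s * f s) / cw_z \<beta> h N"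

definition magnetization :: "nat \<Rightarrow> (nat \<Rightarrow> real) \<Rightarrow> real" where
  "magnetization N s = (\<Sum>i<N. s i) / real N"

lemma cw_weight_pos: "cw_weight \<beta> h N s > 0"
  unfolding cw_weight_def by simp

lemma cw_z_pos: "cw_z \<beta> h N > 0"
  unfolding cw_z_def using spins_nonempty finite_spins cw_weight_pos by (intro sum_pos) auto

lemma cw_expect_cong: "(\<And>s. s \<in> spins N \<Longrightarrow> f s = g s) \<Longrightarrow> cw_expect \<beta> h N f = cw_expect \<beta> h N g"
  unfolding cw_expect_def by simp

lemma cw_expect_linear:
  "cw_expect \<beta> h N (\<lambda>s. a * f s + b * g s + c) = a * cw_expect \<beta> h N f + b * cw_expect \<beta> h N g + c"
proof -
  have "(\<Sum>s\<in>spins N. cw_weight \<beta> h N s * (a * f s + b * g s + c))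
      = a * (\<Sum>s\<in>spins N. cw_weight \<beta> h N s * f s) + b * (\<Sum>s\<in>spins N. cw_weight \<beta> h N s * g s)
        + c * cw_z \<beta> h N"
    unfolding cw_z_def by (simp add: algebra_simps sum.distrib sum_distrib_left)
  then show ?thesis
    unfolding cw_expect_def using cw_z_pos[of \<beta> h N] by (simp add: field_simps)
qed

lemma cw_expect_const: "cw_expect \<beta> h N (\<lambda>_. c) = c"
  using cw_expect_linear[of \<beta> h N 0 "\<lambda>_. 0" 0 "\<lambda>_. 0" c] by simp

lemma cw_expect_scale: "cw_expect \<beta> h N (\<lambda>s. c * f s) = c * cw_expect \<beta> h N f"
  using cw_expect_linear[of \<beta> h N c f 0 f 0] by simp

lemma cw_expect_sum:
  "finite A \<Longrightarrow> cw_expect \<beta> h N (\<lambda>s. \<Sum>a\<in>A. f a s) = (\<Sum>a\<in>A. cw_expect \<beta> h N (f a))"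
  unfolding cw_expect_def by (simp add: sum_distrib_left sum_divide_distrib sum.swap[of _ A])

definition ones_pattern :: "nat \<Rightarrow> nat \<Rightarrow> nat \<Rightarrow> real" where
  "ones_pattern N = (\<lambda>\<mu>\<in>{..<1}. \<lambda>i\<in>{..<N}. 1)"

lemma ones_pattern_training_set: "ones_pattern N \<in> training_sets 1 N"
  unfolding ones_pattern_def training_sets_def spins_def by auto

lemma cw_z_eq_Zpart: "cw_z \<beta> h N = Zpart N (ones_pattern N) \<beta> h 1"
  unfolding cw_z_def Zpart_def cw_weight_def ones_pattern_def by simp

lemma sup_g_weighted_ones_pattern:
  assumes "N \<ge> 1"
  shows "sup_g_weighted 1 \<beta> h (column_law 1 N (ones_pattern N)) = (SUP x. m0_obj \<beta> h x)"
proof -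
  have g: "g_weighted 1 \<beta> h (column_law 1 N (ones_pattern N)) p = m0_obj \<beta> h (p 0)" for p
    unfolding empirical_g_eq_g_weighted[OF ones_pattern_training_set, symmetric]
    using assms by (simp add: empirical_g_def m0_obj_def ones_pattern_def)
  have "x \<in> (\<lambda>p. p 0) ` ({..<1::nat} \<rightarrow>\<^sub>E UNIV)" for x :: real
  proof (rule image_eqI)
    show "x = (\<lambda>_\<in>{..<1::nat}. x) 0"
      by simp
    show "(\<lambda>_\<in>{..<1::nat}. x) \<in> {..<1} \<rightarrow>\<^sub>E UNIV"
      by (simp only: restrict_PiE_iff) simp
  qed
  then have surj: "(\<lambda>p. p 0) ` ({..<1::nat} \<rightarrow>\<^sub>E (UNIV::real set)) = UNIV"
    by blast
  have "sup_g_weighted 1 \<beta> h (column_law 1 N (ones_pattern N))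
      = Sup (m0_obj \<beta> h ` (\<lambda>p. p 0) ` ({..<1::nat} \<rightarrow>\<^sub>E UNIV))"
    unfolding sup_g_weighted_def g by (simp only: image_image)
  then show ?thesis
    unfolding surj .
qed

lemma cw_free_energy_limit:
  assumes "\<beta> > 0"
  shows "(\<lambda>N. ln (cw_z \<beta> h N) / real N) \<longlonglongrightarrow> (SUP x. m0_obj \<beta> h x)"
proof -
  have "\<bar>ln (cw_z \<beta> h N) / real N - (SUP x. m0_obj \<beta> h x)\<bar> \<le> laplace_error 1 \<beta> N" if "N \<ge> 1" for N
    using ln_Zpart_approx[OF ones_pattern_training_set that, of \<beta> h] assms
    unfolding cw_z_eq_Zpart sup_g_weighted_ones_pattern[OF that] by simp
  then have "\<forall>\<^sub>F N in sequentially. norm (ln (cw_z \<beta> h N) / real N - (SUP x. m0_obj \<beta> h x)) \<le> laplace_error 1 \<beta> N"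
    unfolding eventually_sequentially by auto
  then have "(\<lambda>N. ln (cw_z \<beta> h N) / real N - (SUP x. m0_obj \<beta> h x)) \<longlonglongrightarrow> 0"
    by (rule Lim_null_comparison) (rule laplace_error_tendsto_zero)
  then show ?thesis
    by (simp add: LIM_zero_iff)
qed

section \<open>Convexity of the free energy and the limiting magnetisation\<close>

lemma weighted_sum_exp_ge:
  assumes "finite A" "A \<noteq> {}" "\<And>a. a \<in> A \<Longrightarrow> w a > (0::real)"
  shows "(\<Sum>a\<in>A. w a) * exp ((\<Sum>a\<in>A. w a * X a) / (\<Sum>a\<in>A. w a)) \<le> (\<Sum>a\<in>A. w a * exp (X a))"
proof -
  define W where "W = (\<Sum>a\<in>A. w a)"
  define c where "c = (\<Sum>a\<in>A. w a * X a) / W"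
  have "W > 0"
    unfolding W_def using assms by (intro sum_pos) auto
  have "w a * (exp c * (1 + (X a - c))) \<le> w a * exp (X a)" if "a \<in> A" for a
  proof -
    have "exp c * (1 + (X a - c)) \<le> exp c * exp (X a - c)"
      by (intro mult_left_mono exp_ge_add_one_self) simp
    then show ?thesis
      using assms(3)[OF that] by (simp add: mult_exp_exp)
  qed
  then have "(\<Sum>a\<in>A. w a * (exp c * (1 + (X a - c)))) \<le> (\<Sum>a\<in>A. w a * exp (X a))"
    by (rule sum_mono)
  moreover have "(\<Sum>a\<in>A. w a * (exp c * (1 + (X a - c)))) = exp c * (W + (\<Sum>a\<in>A. w a * X a) - c * W)"
    unfolding W_def by (simp add: algebra_simps sum.distrib sum_subtractf sum_distrib_left sum_distrib_right)
  moreover have "(\<Sum>a\<in>A. w a * X a) = c * W"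
    unfolding c_def using \<open>W > 0\<close> by simp
  ultimately show ?thesis
    unfolding c_def W_def by (simp add: mult.commute)
qed

definition pair_energy :: "nat \<Rightarrow> (nat \<Rightarrow> real) \<Rightarrow> real" where
  "pair_energy N s = (\<Sum>j<N. \<Sum>i<j. s i * s j) / real N"

lemma pair_energy_spins:
  assumes "s \<in> spins N" "N \<ge> 1"
  shows "pair_energy N s = (real N * (magnetization N s)\<^sup>2 - 1) / 2"
proof -
  have "(\<Sum>i<N. (s i)\<^sup>2) = real N"
    using spins_square[OF assms(1)] by simp
  then show ?thesis
    unfolding pair_energy_def magnetization_def sum_lower_pairs using assms(2)
    by (simp add: field_simps power2_eq_square)
qed

lemma cw_weight_shift:
  "cw_weight (\<beta> + \<delta> * u) (h + \<delta> * v) N s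
     = cw_weight \<beta> h N s * exp (\<delta> * (u * pair_energy N s + v * (\<Sum>i<N. s i)))"
  unfolding cw_weight_def pair_energy_def by (simp add: mult_exp_exp algebra_simps add_divide_distrib)

text \<open>Jensen's inequality for the Gibbs average: \<open>ln cw_z\<close> is convex in \<open>(\<beta>, h)\<close>.\<close>

lemma ln_cw_z_shift_ge:
  "\<delta> * cw_expect \<beta> h N (\<lambda>s. u * pair_energy N s + v * (\<Sum>i<N. s i))
     \<le> ln (cw_z (\<beta> + \<delta> * u) (h + \<delta> * v) N) - ln (cw_z \<beta> h N)"
proof -
  let ?w = "cw_weight \<beta> h N" and ?Y = "\<lambda>s. \<delta> * (u * pair_energy N s + v * (\<Sum>i<N. s i))"
  have "cw_z \<beta> h N * exp (\<delta> * cw_expect \<beta> h N (\<lambda>s. u * pair_energy N s + v * (\<Sum>i<N. s i)))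
      = (\<Sum>s\<in>spins N. ?w s) * exp ((\<Sum>s\<in>spins N. ?w s * ?Y s) / (\<Sum>s\<in>spins N. ?w s))"
    unfolding cw_expect_def cw_z_def by (simp add: sum_distrib_left mult_ac)
  also have "\<dots> \<le> (\<Sum>s\<in>spins N. ?w s * exp (?Y s))"
    using finite_spins spins_nonempty cw_weight_pos by (intro weighted_sum_exp_ge) auto
  also have "\<dots> = cw_z (\<beta> + \<delta> * u) (h + \<delta> * v) N"
    unfolding cw_z_def cw_weight_shift ..
  finally show ?thesis
    using cw_z_pos[of \<beta> h N] cw_z_pos[of "\<beta> + \<delta> * u" "h + \<delta> * v" N]
    by (simp add: ln_le_cancel_iff[symmetric] ln_mult)
qed

definition cw_directional_moment :: "real \<Rightarrow> real \<Rightarrow> real \<Rightarrow> real \<Rightarrow> nat \<Rightarrow> real" where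
  "cw_directional_moment \<beta> h u v N =
     u * (cw_expect \<beta> h N (\<lambda>s. (magnetization N s)\<^sup>2) - 1 / real N) / 2 + v * cw_expect \<beta> h N (magnetization N)"

lemma cw_directional_moment_le_slope:
  assumes "N \<ge> 1"
  shows "\<delta> * cw_directional_moment \<beta> h u v N
    \<le> ln (cw_z (\<beta> + \<delta> * u) (h + \<delta> * v) N) / real N - ln (cw_z \<beta> h N) / real N"
proof -
  have "cw_expect \<beta> h N (\<lambda>s. u * pair_energy N s + v * (\<Sum>i<N. s i))
      = cw_expect \<beta> h N (\<lambda>s. (u * real N / 2) * (magnetization N s)\<^sup>2 + (v * real N) * magnetization N s
          + (- u / 2))"
    using assms by (intro cw_expect_cong) (simp add: pair_energy_spins magnetization_def field_simps)
  also have "\<dots> = (u * real N / 2) * cw_expect \<beta> h N (\<lambda>s. (magnetization N s)\<^sup>2)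
      + (v * real N) * cw_expect \<beta> h N (magnetization N) + (- u / 2)"
    by (rule cw_expect_linear)
  also have "\<dots> = real N * cw_directional_moment \<beta> h u v N"
    unfolding cw_directional_moment_def using assms by (simp add: field_simps)
  finally show ?thesis
    using ln_cw_z_shift_ge[of \<delta> \<beta> h N u v] assms by (simp add: field_simps)
qed

text \<open>Griffiths' lemma: slopes of convex functions converge to the derivative of their limit.\<close>

lemma tendsto_of_difference_quotients:
  fixes a :: "nat \<Rightarrow> real" and F :: "real \<Rightarrow> nat \<Rightarrow> real" and \<phi> :: "real \<Rightarrow> real"
  assumes slope: "\<And>\<delta>. \<forall>\<^sub>F N in sequentially. \<delta> * a N \<le> F \<delta> N - F 0 N"
    and lim0: "F 0 \<longlonglongrightarrow> \<phi> 0"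
    and quotients: "\<And>\<eta>. \<eta> > 0 \<Longrightarrow> \<exists>\<delta>>0. F \<delta> \<longlonglongrightarrow> \<phi> \<delta> \<and> F (-\<delta>) \<longlonglongrightarrow> \<phi> (-\<delta>)
        \<and> \<phi> \<delta> \<le> \<phi> 0 + \<delta> * (D + \<eta>) \<and> \<phi> (-\<delta>) \<le> \<phi> 0 - \<delta> * (D - \<eta>)"
  shows "a \<longlonglongrightarrow> D"
proof (rule tendstoI)
  fix \<epsilon> :: real
  assume "\<epsilon> > 0"
  define \<eta> where "\<eta> = \<epsilon> / 4"
  then obtain \<delta> where \<delta>: "\<delta> > 0" "F \<delta> \<longlonglongrightarrow> \<phi> \<delta>" "F (-\<delta>) \<longlonglongrightarrow> \<phi> (-\<delta>)"
      "\<phi> \<delta> \<le> \<phi> 0 + \<delta> * (D + \<eta>)" "\<phi> (-\<delta>) \<le> \<phi> 0 - \<delta> * (D - \<eta>)"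
    using quotients \<open>\<epsilon> > 0\<close> by fastforce
  have "\<delta> * \<eta> > 0"
    using \<delta>(1) \<open>\<epsilon> > 0\<close> unfolding \<eta>_def by simp
  then have close: "\<forall>\<^sub>F N in sequentially. \<bar>F t N - \<phi> t\<bar> < \<delta> * \<eta>" if "F t \<longlonglongrightarrow> \<phi> t" for t
    using that unfolding tendsto_iff dist_real_def by blast
  from close[OF \<delta>(2)] close[OF \<delta>(3)] close[OF lim0] slope[of \<delta>] slope[of "-\<delta>"]
  show "\<forall>\<^sub>F N in sequentially. dist (a N) D < \<epsilon>"
  proof eventually_elim
    case (elim N)
    then have "\<delta> * a N < \<delta> * (D + 3 * \<eta>)" "\<delta> * (D - 3 * \<eta>) < \<delta> * a N"
      using \<delta>(4,5) by (auto simp: abs_less_iff algebra_simps)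
    then have "a N < D + 3 * \<eta>" "D - 3 * \<eta> < a N"
      using \<delta>(1) by simp_all
    then show ?case
      unfolding dist_real_def \<eta>_def using \<open>\<epsilon> > 0\<close> by (simp add: abs_less_iff)
  qed
qed

lemma SUP_m0_obj_perturb_le:
  assumes "cw_regime \<beta> h" "\<bar>u\<bar> \<le> 1" "\<bar>v\<bar> \<le> 1" "\<eta> > 0"
  obtains \<delta>0 where "\<delta>0 > 0" "\<And>\<delta>. 0 < \<delta> \<Longrightarrow> \<delta> < \<delta>0 \<Longrightarrow> (SUP x. m0_obj (\<beta> + \<delta> * u) (h + \<delta> * v) x)
      \<le> (SUP x. m0_obj \<beta> h x) + \<delta> * (u * (m0 \<beta> h)\<^sup>2 / 2 + v * m0 \<beta> h + \<eta>)"
proof -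
  obtain \<delta>0 where "\<delta>0 > 0" and le: "\<And>\<delta> x. 0 < \<delta> \<Longrightarrow> \<delta> < \<delta>0 \<Longrightarrow> m0_obj (\<beta> + \<delta> * u) (h + \<delta> * v) x
      \<le> m0_obj \<beta> h (m0 \<beta> h) + \<delta> * (u * (m0 \<beta> h)\<^sup>2 / 2 + v * m0 \<beta> h + \<eta>)"
    using m0_obj_perturb[OF assms] by blast
  show thesis
    using le by (intro that[OF \<open>\<delta>0 > 0\<close>]) (auto intro!: cSUP_least simp: SUP_m0_obj[OF assms(1)])
qed

lemma cw_directional_moment_limit:
  assumes hy: "cw_regime \<beta> h" and u: "\<bar>u\<bar> \<le> 1" and v: "\<bar>v\<bar> \<le> 1"
  shows "cw_directional_moment \<beta> h u v \<longlonglongrightarrow> u * (m0 \<beta> h)\<^sup>2 / 2 + v * m0 \<beta> h"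
proof -
  define F where "F \<delta> N = ln (cw_z (\<beta> + \<delta> * u) (h + \<delta> * v) N) / real N" for \<delta> N
  define \<phi> where "\<phi> \<delta> = (SUP x. m0_obj (\<beta> + \<delta> * u) (h + \<delta> * v) x)" for \<delta>
  let ?D = "u * (m0 \<beta> h)\<^sup>2 / 2 + v * m0 \<beta> h"
  have \<beta>: "\<beta> > 0"
    using hy unfolding cw_regime_def by simp
  have lim: "F \<delta> \<longlonglongrightarrow> \<phi> \<delta>" if "\<bar>\<delta>\<bar> < \<beta>" for \<delta>
  proof -
    have "\<bar>\<delta> * u\<bar> < \<beta>"
      using that u abs_mult_le_mult[OF order_refl u, of \<delta>] by simp
    then show ?thesis
      unfolding F_def \<phi>_def by (intro cw_free_energy_limit) simp
  qed
  show ?thesis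
  proof (rule tendsto_of_difference_quotients[where F = F and \<phi> = \<phi>])
    show "\<forall>\<^sub>F N in sequentially. \<delta> * cw_directional_moment \<beta> h u v N \<le> F \<delta> N - F 0 N" for \<delta>
      unfolding F_def using eventually_ge_at_top[of 1]
      by eventually_elim (simp add: cw_directional_moment_le_slope)
    show "F 0 \<longlonglongrightarrow> \<phi> 0"
      using lim \<beta> by simp
  next
    fix \<eta> :: real
    assume "\<eta> > 0"
    obtain \<delta>1 where "\<delta>1 > 0" and up: "\<And>\<delta>. 0 < \<delta> \<Longrightarrow> \<delta> < \<delta>1 \<Longrightarrow> \<phi> \<delta> \<le> \<phi> 0 + \<delta> * (?D + \<eta>)"
      using SUP_m0_obj_perturb_le[OF hy u v \<open>\<eta> > 0\<close>] unfolding \<phi>_def by auto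
    obtain \<delta>2 where "\<delta>2 > 0" and down: "\<And>\<delta>. 0 < \<delta> \<Longrightarrow> \<delta> < \<delta>2 \<Longrightarrow> \<phi> (-\<delta>) \<le> \<phi> 0 - \<delta> * (?D - \<eta>)"
      using SUP_m0_obj_perturb_le[OF hy _ _ \<open>\<eta> > 0\<close>, of "-u" "-v"] u v
      unfolding \<phi>_def by (auto simp: algebra_simps)
    define \<delta> where "\<delta> = min (min \<delta>1 \<delta>2) \<beta> / 2"
    have "\<delta> > 0" "\<delta> < \<delta>1" "\<delta> < \<delta>2" "\<bar>\<delta>\<bar> < \<beta>"
      unfolding \<delta>_def using \<open>\<delta>1 > 0\<close> \<open>\<delta>2 > 0\<close> \<beta> by auto
    then show "\<exists>\<delta>>0. F \<delta> \<longlonglongrightarrow> \<phi> \<delta> \<and> F (-\<delta>) \<longlonglongrightarrow> \<phi> (-\<delta>)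
        \<and> \<phi> \<delta> \<le> \<phi> 0 + \<delta> * (?D + \<eta>) \<and> \<phi> (-\<delta>) \<le> \<phi> 0 - \<delta> * (?D - \<eta>)"
      using lim up down by (intro exI[of _ \<delta>]) auto
  qed
qed

lemma cw_mean_magnetization_limit:
  "cw_regime \<beta> h \<Longrightarrow> (\<lambda>N. cw_expect \<beta> h N (magnetization N)) \<longlonglongrightarrow> m0 \<beta> h"
  using cw_directional_moment_limit[of \<beta> h 0 1] unfolding cw_directional_moment_def by simp

lemma cw_mean_sq_magnetization_limit:
  assumes "cw_regime \<beta> h"
  shows "(\<lambda>N. cw_expect \<beta> h N (\<lambda>s. (magnetization N s)\<^sup>2)) \<longlonglongrightarrow> (m0 \<beta> h)\<^sup>2"
proof -
  have "(\<lambda>N. 2 * cw_directional_moment \<beta> h 1 0 N + 1 / real N) \<longlonglongrightarrow> 2 * ((m0 \<beta> h)\<^sup>2 / 2) + 0"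
    using cw_directional_moment_limit[OF assms, of 1 0]
    by (intro tendsto_add tendsto_mult_left lim_inverse_n') simp
  then show ?thesis
    unfolding cw_directional_moment_def by (simp add: diff_divide_distrib)
qed

section \<open>Exchangeability and the pair correlation\<close>

lemma sum_lessThan_transpose: "i < N \<Longrightarrow> k < N \<Longrightarrow> (\<Sum>x<N. g (Transposition.transpose i k x)) = (\<Sum>x<N. g x)"
  by (rule sum.reindex_bij_witness[where i = "Transposition.transpose i k" and j = "Transposition.transpose i k"])
    (auto simp: Transposition.transpose_def)

lemma spins_comp_transpose:
  assumes "i < N" "k < N" "s \<in> spins N"
  shows "s \<circ> Transposition.transpose i k \<in> spins N"
  using assms unfolding spins_def by (auto simp: PiE_iff extensional_def Transposition.transpose_def)

lemma cw_weight_comp_transpose: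
  "i < N \<Longrightarrow> k < N \<Longrightarrow> cw_weight \<beta> h N (s \<circ> Transposition.transpose i k) = cw_weight \<beta> h N s"
  unfolding cw_weight_def sum_lower_pairs comp_def
  using sum_lessThan_transpose[of i N k s] sum_lessThan_transpose[of i N k "\<lambda>x. (s x)\<^sup>2"] by simp

lemma cw_expect_comp_transpose:
  assumes "i < N" "k < N"
  shows "cw_expect \<beta> h N (\<lambda>s. f (s \<circ> Transposition.transpose i k)) = cw_expect \<beta> h N f"
proof -
  have "(\<Sum>s\<in>spins N. cw_weight \<beta> h N s * f (s \<circ> Transposition.transpose i k))
      = (\<Sum>s\<in>spins N. cw_weight \<beta> h N (s \<circ> Transposition.transpose i k) * f (s \<circ> Transposition.transpose i k))"
    using cw_weight_comp_transpose[OF assms] by simp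
  also have "\<dots> = (\<Sum>s\<in>spins N. cw_weight \<beta> h N s * f s)"
    by (rule sum.reindex_bij_witness[where i = "\<lambda>s. s \<circ> Transposition.transpose i k" and j = "\<lambda>s. s \<circ> Transposition.transpose i k"])
      (auto simp: spins_comp_transpose[OF assms] fun_eq_iff)
  finally show ?thesis
    unfolding cw_expect_def by simp
qed

lemma cw_expect_spin:
  assumes "i < N"
  shows "cw_expect \<beta> h N (\<lambda>s. s i) = cw_expect \<beta> h N (magnetization N)"
proof -
  have "cw_expect \<beta> h N (\<lambda>s. s k) = cw_expect \<beta> h N (\<lambda>s. s i)" if "k < N" for k
    using cw_expect_comp_transpose[OF that assms, of \<beta> h "\<lambda>s. s k"] by simp
  then have "cw_expect \<beta> h N (magnetization N) = (1 / real N) * (\<Sum>k<N. cw_expect \<beta> h N (\<lambda>s. s i))"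
    unfolding magnetization_def by (simp add: cw_expect_scale[where c = "1 / real N", simplified] cw_expect_sum)
  with assms show ?thesis
    by simp
qed

lemma cw_expect_spin_pair_swap:
  assumes "i < N" "k < N" "j < N" "i \<noteq> j" "k \<noteq> j"
  shows "cw_expect \<beta> h N (\<lambda>s. s i * s j) = cw_expect \<beta> h N (\<lambda>s. s k * s j)"
  using cw_expect_comp_transpose[OF assms(2,1), of \<beta> h "\<lambda>s. s i * s j"] assms(4,5) by simp

lemma cw_expect_spin_pair_eq:
  assumes "i < N" "j < N" "k < N" "l < N" "i \<noteq> j" "k \<noteq> l"
  shows "cw_expect \<beta> h N (\<lambda>s. s i * s j) = cw_expect \<beta> h N (\<lambda>s. s k * s l)"
proof (cases "l = i")
  case True
  have "cw_expect \<beta> h N (\<lambda>s. s i * s j) = cw_expect \<beta> h N (\<lambda>s. s j * s l)"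
    using True by (simp add: mult.commute)
  also have "\<dots> = cw_expect \<beta> h N (\<lambda>s. s k * s l)"
    using assms True by (intro cw_expect_spin_pair_swap) auto
  finally show ?thesis .
next
  case False
  have "cw_expect \<beta> h N (\<lambda>s. s i * s j) = cw_expect \<beta> h N (\<lambda>s. s j * s i)"
    by (simp add: mult.commute)
  also have "\<dots> = cw_expect \<beta> h N (\<lambda>s. s l * s i)"
    using assms False by (intro cw_expect_spin_pair_swap) auto
  also have "\<dots> = cw_expect \<beta> h N (\<lambda>s. s i * s l)"
    by (simp add: mult.commute)
  also have "\<dots> = cw_expect \<beta> h N (\<lambda>s. s k * s l)"
    using assms False by (intro cw_expect_spin_pair_swap) auto
  finally show ?thesis .
qed

lemma sum_diagonal_off_diagonal:
  fixes X :: "nat \<Rightarrow> nat \<Rightarrow> real"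
  assumes "\<And>i. i < N \<Longrightarrow> X i i = A" "\<And>i j. i < N \<Longrightarrow> j < N \<Longrightarrow> i \<noteq> j \<Longrightarrow> X i j = B"
  shows "(\<Sum>i<N. \<Sum>j<N. X i j) = real N * A + real N * (real N - 1) * B"
proof -
  have "(\<Sum>j<N. X i j) = A + (real N - 1) * B" if "i < N" for i
  proof -
    have "(\<Sum>j<N. X i j) = X i i + (\<Sum>j\<in>{..<N} - {i}. X i j)"
      using that by (subst sum.remove[of _ i]) auto
    also have "(\<Sum>j\<in>{..<N} - {i}. X i j) = (\<Sum>j\<in>{..<N} - {i}. B)"
      using assms(2) that by (intro sum.cong refl) auto
    finally show ?thesis
      using assms(1) that by (simp add: of_nat_diff)
  qed
  then have "(\<Sum>i<N. \<Sum>j<N. X i j) = (\<Sum>i<N. A + (real N - 1) * B)"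
    by simp
  then show ?thesis
    by (simp add: algebra_simps)
qed

definition cw_pair_corr :: "real \<Rightarrow> real \<Rightarrow> nat \<Rightarrow> real" where
  "cw_pair_corr \<beta> h N = (real N * cw_expect \<beta> h N (\<lambda>s. (magnetization N s)\<^sup>2) - 1) / (real N - 1)"

lemma cw_expect_spin_pair:
  assumes "i < N" "j < N" "i \<noteq> j"
  shows "cw_expect \<beta> h N (\<lambda>s. s i * s j) = cw_pair_corr \<beta> h N"
proof -
  let ?c = "cw_expect \<beta> h N (\<lambda>s. s i * s j)"
  have "cw_expect \<beta> h N (\<lambda>s. s k * s k) = 1" if "k < N" for k
    using spins_square[OF _ that] cw_expect_cong[of N "\<lambda>s. s k * s k" "\<lambda>_. 1"]
    by (simp add: power2_eq_square cw_expect_const)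
  then have sum_eq: "(\<Sum>k<N. \<Sum>l<N. cw_expect \<beta> h N (\<lambda>s. s k * s l)) = real N * 1 + real N * (real N - 1) * ?c"
    using cw_expect_spin_pair_eq[OF assms(1,2) _ _ assms(3)] by (intro sum_diagonal_off_diagonal) auto
  have sq_eq: "cw_expect \<beta> h N (\<lambda>s. (magnetization N s)\<^sup>2)
      = (1 / (real N)\<^sup>2) * (\<Sum>k<N. \<Sum>l<N. cw_expect \<beta> h N (\<lambda>s. s k * s l))"
  proof -
    have "cw_expect \<beta> h N (\<lambda>s. (magnetization N s)\<^sup>2)
        = cw_expect \<beta> h N (\<lambda>s. (1 / (real N)\<^sup>2) * (\<Sum>k<N. \<Sum>l<N. s k * s l))"
      unfolding magnetization_def by (simp add: power2_eq_square sum_product)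
    also have "\<dots> = (1 / (real N)\<^sup>2) * cw_expect \<beta> h N (\<lambda>s. \<Sum>k<N. \<Sum>l<N. s k * s l)"
      by (rule cw_expect_scale)
    finally show ?thesis
      by (simp add: cw_expect_sum)
  qed
  have "real N > 0"
    using assms by simp
  then have "real N * cw_expect \<beta> h N (\<lambda>s. (magnetization N s)\<^sup>2) = 1 + (real N - 1) * ?c"
    unfolding sq_eq sum_eq by (simp add: field_simps power2_eq_square)
  moreover have "real N - 1 \<noteq> 0"
    using assms by linarith
  ultimately show ?thesis
    unfolding cw_pair_corr_def by simp
qed

lemma cw_pair_corr_limit:
  assumes "cw_regime \<beta> h"
  shows "cw_pair_corr \<beta> h \<longlonglongrightarrow> (m0 \<beta> h)\<^sup>2"
proof -
  have "(\<lambda>N. real N / (real N - 1) * cw_expect \<beta> h N (\<lambda>s. (magnetization N s)\<^sup>2) - 1 / (real N - 1))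
      \<longlonglongrightarrow> 1 * (m0 \<beta> h)\<^sup>2 - 0"
    by (intro tendsto_intros cw_mean_sq_magnetization_limit[OF assms]) real_asymp+
  moreover have "\<forall>\<^sub>F N in sequentially. real N / (real N - 1) * cw_expect \<beta> h N (\<lambda>s. (magnetization N s)\<^sup>2)
      - 1 / (real N - 1) = cw_pair_corr \<beta> h N"
    using eventually_ge_at_top[of 2]
    by eventually_elim (simp add: cw_pair_corr_def diff_divide_distrib)
  ultimately show ?thesis
    by (simp add: Lim_transform_eventually)
qed

definition training_expect ::
    "real \<Rightarrow> (nat \<Rightarrow> real) \<Rightarrow> nat \<Rightarrow> nat \<Rightarrow> ((nat \<Rightarrow> nat \<Rightarrow> real) \<Rightarrow> real) \<Rightarrow> real" where
  "training_expect \<beta> hv M N f = (\<Sum>S\<in>training_sets M N. P_CW \<beta> hv M N S * f S)"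

lemma P_CW_nonneg: "P_CW \<beta> hv M N S \<ge> 0"
  unfolding P_CW_def using cw_weight_pos cw_z_pos by (intro prod_nonneg) (auto intro: less_imp_le)

lemma training_expect_prod:
  "training_expect \<beta> hv M N (\<lambda>S. \<Prod>\<mu><M. \<phi> \<mu> (S \<mu>)) = (\<Prod>\<mu><M. cw_expect \<beta> (hv \<mu>) N (\<phi> \<mu>))"
proof -
  have "(\<Prod>\<mu><M. cw_expect \<beta> (hv \<mu>) N (\<phi> \<mu>))
      = (\<Prod>\<mu><M. \<Sum>s\<in>spins N. cw_weight \<beta> (hv \<mu>) N s / cw_z \<beta> (hv \<mu>) N * \<phi> \<mu> s)"
    unfolding cw_expect_def by (simp add: sum_divide_distrib)
  also have "\<dots> = (\<Sum>S\<in>training_sets M N. \<Prod>\<mu><M. cw_weight \<beta> (hv \<mu>) N (S \<mu>) / cw_z \<beta> (hv \<mu>) N * \<phi> \<mu> (S \<mu>))"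
    unfolding training_sets_def by (rule prod_sum_PiE) (auto simp: finite_spins)
  also have "\<dots> = training_expect \<beta> hv M N (\<lambda>S. \<Prod>\<mu><M. \<phi> \<mu> (S \<mu>))"
    unfolding training_expect_def P_CW_def by (simp only: prod.distrib)
  finally show ?thesis
    by (rule sym)
qed

lemma training_expect_linear:
  "training_expect \<beta> hv M N (\<lambda>S. a * f S + b * g S + c)
     = a * training_expect \<beta> hv M N f + b * training_expect \<beta> hv M N g + c"
proof -
  have "training_expect \<beta> hv M N (\<lambda>S. a * f S + b * g S + c)
      = a * training_expect \<beta> hv M N f + b * training_expect \<beta> hv M N g + c * training_expect \<beta> hv M N (\<lambda>_. 1)"
    unfolding training_expect_def by (simp add: algebra_simps sum.distrib sum_distrib_left)
  moreover have "training_expect \<beta> hv M N (\<lambda>_. 1) = 1"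
    using training_expect_prod[of \<beta> hv M N "\<lambda>_ _. 1"] by (simp add: cw_expect_const)
  ultimately show ?thesis
    by simp
qed

lemma training_expect_scale: "training_expect \<beta> hv M N (\<lambda>S. c * f S) = c * training_expect \<beta> hv M N f"
  using training_expect_linear[of \<beta> hv M N c f 0 f 0] by simp

lemma training_expect_sum:
  "finite A \<Longrightarrow> training_expect \<beta> hv M N (\<lambda>S. \<Sum>a\<in>A. f a S) = (\<Sum>a\<in>A. training_expect \<beta> hv M N (f a))"
  unfolding training_expect_def by (simp add: sum_distrib_left sum.swap[of _ A])

lemma training_expect_divide: "training_expect \<beta> hv M N (\<lambda>S. f S / c) = training_expect \<beta> hv M N f / c"
  unfolding training_expect_def by (simp add: sum_divide_distrib)

lemma training_expect_mono:
  "(\<And>S. S \<in> training_sets M N \<Longrightarrow> f S \<le> g S) \<Longrightarrow> training_expect \<beta> hv M N f \<le> training_expect \<beta> hv M N g"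
  unfolding training_expect_def using P_CW_nonneg by (intro sum_mono mult_left_mono) auto

lemma training_expect_cong:
  "(\<And>S. S \<in> training_sets M N \<Longrightarrow> f S = g S) \<Longrightarrow> training_expect \<beta> hv M N f = training_expect \<beta> hv M N g"
  unfolding training_expect_def by simp

lemma training_expect_nonneg:
  "(\<And>S. S \<in> training_sets M N \<Longrightarrow> 0 \<le> f S) \<Longrightarrow> 0 \<le> training_expect \<beta> hv M N f"
  unfolding training_expect_def by (intro sum_nonneg mult_nonneg_nonneg P_CW_nonneg) auto

lemma training_expect_abs: "\<bar>training_expect \<beta> hv M N f\<bar> \<le> training_expect \<beta> hv M N (\<lambda>S. \<bar>f S\<bar>)"
proof -
  have "training_expect \<beta> hv M N f \<le> training_expect \<beta> hv M N (\<lambda>S. \<bar>f S\<bar>)"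
    by (rule training_expect_mono) simp
  moreover have "training_expect \<beta> hv M N (\<lambda>S. (-1) * f S) \<le> training_expect \<beta> hv M N (\<lambda>S. \<bar>f S\<bar>)"
    by (rule training_expect_mono) simp
  ultimately show ?thesis
    unfolding training_expect_scale by (simp add: abs_le_iff)
qed

lemma training_expect_sq_le:
  "(training_expect \<beta> hv M N f)\<^sup>2 \<le> training_expect \<beta> hv M N (\<lambda>S. (f S)\<^sup>2)"
proof -
  let ?m = "training_expect \<beta> hv M N f"
  have "0 \<le> training_expect \<beta> hv M N (\<lambda>S. (f S - ?m)\<^sup>2)"
    by (rule training_expect_nonneg) simp
  also have "\<dots> = training_expect \<beta> hv M N (\<lambda>S. 1 * (f S)\<^sup>2 + (- 2 * ?m) * f S + ?m\<^sup>2)"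
    by (intro training_expect_cong) (simp add: power2_eq_square algebra_simps)
  also have "\<dots> = training_expect \<beta> hv M N (\<lambda>S. (f S)\<^sup>2) - ?m\<^sup>2"
    unfolding training_expect_linear by (simp add: power2_eq_square)
  finally show ?thesis
    by simp
qed

section \<open>Concentration of the law of columns\<close>

lemma cw_expect_spin_factor:
  assumes "i < N"
  shows "cw_expect \<beta> h N (\<lambda>s. (1 + s i * a) / 2) = (1 + cw_expect \<beta> h N (magnetization N) * a) / 2"
proof -
  have "cw_expect \<beta> h N (\<lambda>s. (1 + s i * a) / 2) = cw_expect \<beta> h N (\<lambda>s. (a / 2) * s i + 0 * s i + 1 / 2)"
    by (intro cw_expect_cong) (simp add: field_simps)
  also have "\<dots> = (a / 2) * cw_expect \<beta> h N (\<lambda>s. s i) + 1 / 2"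
    by (simp only: cw_expect_linear)
  finally show ?thesis
    by (simp add: cw_expect_spin[OF assms] field_simps)
qed

lemma cw_expect_spin_factor_sq:
  assumes "i < N" "a = -1 \<or> a = 1"
  shows "cw_expect \<beta> h N (\<lambda>s. (1 + s i * a) / 2 * ((1 + s i * a) / 2))
    = (1 + cw_expect \<beta> h N (magnetization N) * a) / 2"
proof -
  have "cw_expect \<beta> h N (\<lambda>s. (1 + s i * a) / 2 * ((1 + s i * a) / 2)) = cw_expect \<beta> h N (\<lambda>s. (1 + s i * a) / 2)"
  proof (rule cw_expect_cong)
    fix s
    assume "s \<in> spins N"
    then show "(1 + s i * a) / 2 * ((1 + s i * a) / 2) = (1 + s i * a) / 2"
      using spins_values[OF _ assms(1)] assms(2) by fastforce
  qed
  then show ?thesis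
    by (simp add: cw_expect_spin_factor[OF assms(1)])
qed

lemma cw_expect_spin_factor_pair:
  assumes "i < N" "j < N" "i \<noteq> j" "a = -1 \<or> a = 1"
  shows "cw_expect \<beta> h N (\<lambda>s. (1 + s i * a) / 2 * ((1 + s j * a) / 2))
    = (1 + 2 * cw_expect \<beta> h N (magnetization N) * a + cw_pair_corr \<beta> h N) / 4"
proof -
  have "cw_expect \<beta> h N (\<lambda>s. (1 + s i * a) / 2 * ((1 + s j * a) / 2))
      = cw_expect \<beta> h N (\<lambda>s. (a / 4) * (s i + s j) + (1 / 4) * (s i * s j) + 1 / 4)"
    using assms(4) by (intro cw_expect_cong) (auto simp: field_simps)
  also have "\<dots> = (a / 4) * cw_expect \<beta> h N (\<lambda>s. s i + s j) + (1 / 4) * cw_expect \<beta> h N (\<lambda>s. s i * s j) + 1 / 4"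
    by (rule cw_expect_linear)
  also have "cw_expect \<beta> h N (\<lambda>s. s i + s j) = 2 * cw_expect \<beta> h N (magnetization N)"
    using cw_expect_linear[of \<beta> h N 1 "\<lambda>s. s i" 1 "\<lambda>s. s j" 0] cw_expect_spin assms(1,2) by simp
  finally show ?thesis
    using cw_expect_spin_pair[OF assms(1-3)] by (simp add: field_simps)
qed

lemma expect_column_law:
  assumes "N \<ge> 1"
  shows "training_expect \<beta> hv M N (\<lambda>S. column_law M N S c)
    = product_law M (\<lambda>\<mu>. cw_expect \<beta> (hv \<mu>) N (magnetization N)) c"
proof -
  have "training_expect \<beta> hv M N (\<lambda>S. product_law M (\<lambda>\<mu>. S \<mu> i) c)
      = product_law M (\<lambda>\<mu>. cw_expect \<beta> (hv \<mu>) N (magnetization N)) c" if "i < N" for i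
    using training_expect_prod[of \<beta> hv M N "\<lambda>\<mu> s. (1 + s i * c \<mu>) / 2"]
    unfolding product_law_def by (simp add: cw_expect_spin_factor[OF that])
  then have "(\<Sum>i<N. training_expect \<beta> hv M N (\<lambda>S. product_law M (\<lambda>\<mu>. S \<mu> i) c))
      = real N * product_law M (\<lambda>\<mu>. cw_expect \<beta> (hv \<mu>) N (magnetization N)) c"
    by simp
  with assms show ?thesis
    unfolding column_law_def training_expect_divide by (simp add: training_expect_sum)
qed

lemma expect_column_law_sq:
  assumes "N \<ge> 1" "c \<in> spins M"
  shows "training_expect \<beta> hv M N (\<lambda>S. (column_law M N S c)\<^sup>2)
    = product_law M (\<lambda>\<mu>. cw_expect \<beta> (hv \<mu>) N (magnetization N)) c / real N
      + (1 - 1 / real N) * (\<Prod>\<mu><M. (1 + 2 * cw_expect \<beta> (hv \<mu>) N (magnetization N) * c \<mu>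
          + cw_pair_corr \<beta> (hv \<mu>) N) / 4)"
proof -
  let ?P = "\<lambda>S i. product_law M (\<lambda>\<mu>. S \<mu> i) c"
  let ?D1 = "product_law M (\<lambda>\<mu>. cw_expect \<beta> (hv \<mu>) N (magnetization N)) c"
  let ?D2 = "\<Prod>\<mu><M. (1 + 2 * cw_expect \<beta> (hv \<mu>) N (magnetization N) * c \<mu> + cw_pair_corr \<beta> (hv \<mu>) N) / 4"
  have c: "c \<mu> = -1 \<or> c \<mu> = 1" if "\<mu> < M" for \<mu>
    using spins_values[OF assms(2) that] .
  have pair: "training_expect \<beta> hv M N (\<lambda>S. ?P S i * ?P S j)
      = (\<Prod>\<mu><M. cw_expect \<beta> (hv \<mu>) N (\<lambda>s. (1 + s i * c \<mu>) / 2 * ((1 + s j * c \<mu>) / 2)))" for i j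
    using training_expect_prod[of \<beta> hv M N "\<lambda>\<mu> s. (1 + s i * c \<mu>) / 2 * ((1 + s j * c \<mu>) / 2)"]
    unfolding product_law_def by (simp only: prod.distrib)
  have diagonal: "training_expect \<beta> hv M N (\<lambda>S. ?P S i * ?P S i) = ?D1" if "i < N" for i
  proof -
    have "training_expect \<beta> hv M N (\<lambda>S. ?P S i * ?P S i)
        = (\<Prod>\<mu><M. cw_expect \<beta> (hv \<mu>) N (\<lambda>s. (1 + s i * c \<mu>) / 2 * ((1 + s i * c \<mu>) / 2)))"
      by (rule pair)
    also have "\<dots> = ?D1"
      unfolding product_law_def using cw_expect_spin_factor_sq[OF that c] by (intro prod.cong) auto
    finally show ?thesis .
  qed
  have off_diagonal: "training_expect \<beta> hv M N (\<lambda>S. ?P S i * ?P S j) = ?D2" if "i < N" "j < N" "i \<noteq> j" for i j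
  proof -
    have "training_expect \<beta> hv M N (\<lambda>S. ?P S i * ?P S j)
        = (\<Prod>\<mu><M. cw_expect \<beta> (hv \<mu>) N (\<lambda>s. (1 + s i * c \<mu>) / 2 * ((1 + s j * c \<mu>) / 2)))"
      by (rule pair)
    also have "\<dots> = ?D2"
      using cw_expect_spin_factor_pair[OF that c] by (intro prod.cong) auto
    finally show ?thesis .
  qed
  have sum_eq: "(\<Sum>i<N. \<Sum>j<N. training_expect \<beta> hv M N (\<lambda>S. ?P S i * ?P S j))
      = real N * ?D1 + real N * (real N - 1) * ?D2"
    using diagonal off_diagonal by (rule sum_diagonal_off_diagonal)
  have sq_eq: "training_expect \<beta> hv M N (\<lambda>S. (column_law M N S c)\<^sup>2)
      = (1 / (real N)\<^sup>2) * (\<Sum>i<N. \<Sum>j<N. training_expect \<beta> hv M N (\<lambda>S. ?P S i * ?P S j))"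
  proof -
    have "training_expect \<beta> hv M N (\<lambda>S. (column_law M N S c)\<^sup>2)
        = training_expect \<beta> hv M N (\<lambda>S. (1 / (real N)\<^sup>2) * (\<Sum>i<N. \<Sum>j<N. ?P S i * ?P S j))"
      unfolding column_law_def by (simp add: power2_eq_square sum_product)
    also have "\<dots> = (1 / (real N)\<^sup>2) * training_expect \<beta> hv M N (\<lambda>S. \<Sum>i<N. \<Sum>j<N. ?P S i * ?P S j)"
      by (rule training_expect_scale)
    finally show ?thesis
      by (simp add: training_expect_sum)
  qed
  have "real N > 0"
    using assms(1) by simp
  then show ?thesis
    unfolding sq_eq sum_eq by (simp add: field_simps power2_eq_square)
qed

lemma product_law_mean_limit:
  assumes "\<And>\<mu>. \<mu> < M \<Longrightarrow> cw_regime \<beta> (hv \<mu>)"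
  shows "(\<lambda>N. product_law M (\<lambda>\<mu>. cw_expect \<beta> (hv \<mu>) N (magnetization N)) c)
    \<longlonglongrightarrow> product_law M (\<lambda>\<mu>. m0 \<beta> (hv \<mu>)) c"
  unfolding product_law_def using assms
  by (intro tendsto_prod tendsto_divide tendsto_add tendsto_mult tendsto_const cw_mean_magnetization_limit) auto

lemma expect_column_law_limit:
  assumes "\<And>\<mu>. \<mu> < M \<Longrightarrow> cw_regime \<beta> (hv \<mu>)"
  shows "(\<lambda>N. training_expect \<beta> hv M N (\<lambda>S. column_law M N S c)) \<longlonglongrightarrow> product_law M (\<lambda>\<mu>. m0 \<beta> (hv \<mu>)) c"
proof (rule Lim_transform_eventually[OF product_law_mean_limit[OF assms]])
  show "\<forall>\<^sub>F N in sequentially. product_law M (\<lambda>\<mu>. cw_expect \<beta> (hv \<mu>) N (magnetization N)) c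
      = training_expect \<beta> hv M N (\<lambda>S. column_law M N S c)"
    using eventually_ge_at_top[of 1] by eventually_elim (simp add: expect_column_law)
qed

lemma expect_column_law_sq_limit:
  assumes "\<And>\<mu>. \<mu> < M \<Longrightarrow> cw_regime \<beta> (hv \<mu>)" "c \<in> spins M"
  shows "(\<lambda>N. training_expect \<beta> hv M N (\<lambda>S. (column_law M N S c)\<^sup>2))
    \<longlonglongrightarrow> (product_law M (\<lambda>\<mu>. m0 \<beta> (hv \<mu>)) c)\<^sup>2"
proof -
  let ?m = "\<lambda>\<mu>. m0 \<beta> (hv \<mu>)" and ?e = "\<lambda>N \<mu>. cw_expect \<beta> (hv \<mu>) N (magnetization N)"
  let ?D2 = "\<lambda>N. \<Prod>\<mu><M. (1 + 2 * ?e N \<mu> * c \<mu> + cw_pair_corr \<beta> (hv \<mu>) N) / 4"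
  have "?D2 \<longlonglongrightarrow> (\<Prod>\<mu><M. (1 + 2 * ?m \<mu> * c \<mu> + (?m \<mu>)\<^sup>2) / 4)"
    using assms(1) by (intro tendsto_prod tendsto_divide tendsto_add tendsto_mult tendsto_const
        cw_mean_magnetization_limit cw_pair_corr_limit) auto
  also have "(\<Prod>\<mu><M. (1 + 2 * ?m \<mu> * c \<mu> + (?m \<mu>)\<^sup>2) / 4) = (product_law M ?m c)\<^sup>2"
  proof -
    have "(1 + 2 * ?m \<mu> * c \<mu> + (?m \<mu>)\<^sup>2) / 4 = ((1 + ?m \<mu> * c \<mu>) / 2)\<^sup>2" if "\<mu> < M" for \<mu>
      using spins_square[OF assms(2) that] by (simp add: power2_eq_square field_simps)
    then show ?thesis
      unfolding product_law_def by (simp add: prod_power_distrib[symmetric])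
  qed
  finally have D2: "?D2 \<longlonglongrightarrow> (product_law M ?m c)\<^sup>2" .
  have "(\<lambda>N. product_law M (?e N) c * (1 / real N) + (1 - 1 / real N) * ?D2 N)
      \<longlonglongrightarrow> product_law M ?m c * 0 + (1 - 0) * (product_law M ?m c)\<^sup>2"
    by (intro tendsto_add tendsto_mult tendsto_diff tendsto_const lim_inverse_n'
        product_law_mean_limit[OF assms(1)] D2)
  then have "(\<lambda>N. product_law M (?e N) c * (1 / real N) + (1 - 1 / real N) * ?D2 N)
      \<longlonglongrightarrow> (product_law M ?m c)\<^sup>2"
    by simp
  moreover have "\<forall>\<^sub>F N in sequentially. product_law M (?e N) c * (1 / real N) + (1 - 1 / real N) * ?D2 N
      = training_expect \<beta> hv M N (\<lambda>S. (column_law M N S c)\<^sup>2)"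
    using eventually_ge_at_top[of 1] by eventually_elim (simp add: expect_column_law_sq[OF _ assms(2)])
  ultimately show ?thesis
    by (rule Lim_transform_eventually)
qed

lemma expect_column_law_deviation_limit:
  assumes "\<And>\<mu>. \<mu> < M \<Longrightarrow> cw_regime \<beta> (hv \<mu>)" "c \<in> spins M"
  shows "(\<lambda>N. training_expect \<beta> hv M N (\<lambda>S. \<bar>column_law M N S c - product_law M (\<lambda>\<mu>. m0 \<beta> (hv \<mu>)) c\<bar>))
    \<longlonglongrightarrow> 0"
proof -
  let ?B = "product_law M (\<lambda>\<mu>. m0 \<beta> (hv \<mu>)) c"
  let ?V = "\<lambda>N. training_expect \<beta> hv M N (\<lambda>S. (column_law M N S c - ?B)\<^sup>2)"
  have variance: "?V = (\<lambda>N. 1 * training_expect \<beta> hv M N (\<lambda>S. (column_law M N S c)\<^sup>2)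
      + (- 2 * ?B) * training_expect \<beta> hv M N (\<lambda>S. column_law M N S c) + ?B\<^sup>2)"
  proof
    fix N
    have "?V N = training_expect \<beta> hv M N (\<lambda>S. 1 * (column_law M N S c)\<^sup>2 + (- 2 * ?B) * column_law M N S c + ?B\<^sup>2)"
      by (intro training_expect_cong) (simp add: power2_eq_square algebra_simps)
    then show "?V N = 1 * training_expect \<beta> hv M N (\<lambda>S. (column_law M N S c)\<^sup>2)
        + (- 2 * ?B) * training_expect \<beta> hv M N (\<lambda>S. column_law M N S c) + ?B\<^sup>2"
      by (simp only: training_expect_linear)
  qed
  have "?V \<longlonglongrightarrow> 1 * ?B\<^sup>2 + (- 2 * ?B) * ?B + ?B\<^sup>2"
    unfolding variance
    by (intro tendsto_add tendsto_mult tendsto_const expect_column_law_sq_limit[OF assms]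
        expect_column_law_limit[OF assms(1)])
  then have "(\<lambda>N. sqrt (?V N)) \<longlonglongrightarrow> sqrt 0"
    by (intro tendsto_real_sqrt) (simp add: power2_eq_square)
  then have sqrt_lim: "(\<lambda>N. sqrt (?V N)) \<longlonglongrightarrow> 0"
    by simp
  have bound: "norm (training_expect \<beta> hv M N (\<lambda>S. \<bar>column_law M N S c - ?B\<bar>)) \<le> sqrt (?V N)" for N
  proof -
    have "(training_expect \<beta> hv M N (\<lambda>S. \<bar>column_law M N S c - ?B\<bar>))\<^sup>2 \<le> ?V N"
      using training_expect_sq_le[of \<beta> hv M N "\<lambda>S. \<bar>column_law M N S c - ?B\<bar>"] by simp
    moreover have "0 \<le> training_expect \<beta> hv M N (\<lambda>S. \<bar>column_law M N S c - ?B\<bar>)"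
      by (rule training_expect_nonneg) simp
    ultimately show ?thesis
      by (simp add: real_le_rsqrt)
  qed
  show ?thesis
    by (rule Lim_null_comparison[OF always_eventually[OF allI[OF bound]] sqrt_lim])
qed

lemma expected_logZ_eq: "expected_logZ \<beta> lam hv M N = training_expect \<beta> hv M N (\<lambda>S. ln (Zpart N S \<beta> lam M))"
  unfolding expected_logZ_def training_expect_def ..

lemma ln_Zpart_close_to_sup:
  assumes "S \<in> training_sets M N" "N \<ge> 1" "\<beta> \<ge> 0" "prob_weights M w"
  shows "\<bar>ln (Zpart N S \<beta> lam M) / real N - sup_g_weighted M \<beta> lam w\<bar>
    \<le> laplace_error M \<beta> N + (2 * \<beta> * real M + 2 * \<bar>lam\<bar>) * (\<Sum>c\<in>spins M. \<bar>column_law M N S c - w c\<bar>)"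
  using ln_Zpart_approx[OF assms(1-3), of lam]
    sup_g_weighted_lipschitz[OF prob_weights_column_law[OF assms(1,2)] assms(4,3), of lam]
  by linarith

lemma expected_logZ_limit:
  assumes "\<beta> > 0" "\<And>\<mu>. \<mu> < M \<Longrightarrow> cw_regime \<beta> (hv \<mu>)"
  shows "(\<lambda>N. expected_logZ \<beta> lam hv M N / real N)
    \<longlonglongrightarrow> sup_g_weighted M \<beta> lam (product_law M (\<lambda>\<mu>. m0 \<beta> (hv \<mu>)))"
proof -
  let ?w = "product_law M (\<lambda>\<mu>. m0 \<beta> (hv \<mu>))"
  let ?T = "sup_g_weighted M \<beta> lam ?w" and ?K = "2 * \<beta> * real M + 2 * \<bar>lam\<bar>"
  define err where "err N = laplace_error M \<beta> N
    + ?K * (\<Sum>c\<in>spins M. training_expect \<beta> hv M N (\<lambda>S. \<bar>column_law M N S c - ?w c\<bar>))" for N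
  have w: "prob_weights M ?w"
    using abs_m0_less_one assms(2) by (intro prob_weights_product_law) (simp add: less_imp_le)
  have "\<bar>expected_logZ \<beta> lam hv M N / real N - ?T\<bar> \<le> err N" if "N \<ge> 1" for N
  proof -
    have "expected_logZ \<beta> lam hv M N / real N - ?T
        = training_expect \<beta> hv M N (\<lambda>S. ln (Zpart N S \<beta> lam M) / real N - ?T)"
      using training_expect_linear[of \<beta> hv M N "1 / real N" "\<lambda>S. ln (Zpart N S \<beta> lam M)" 0 "\<lambda>_. 0" "- ?T"]
      unfolding expected_logZ_eq by simp
    then have "\<bar>expected_logZ \<beta> lam hv M N / real N - ?T\<bar>
        \<le> training_expect \<beta> hv M N (\<lambda>S. \<bar>ln (Zpart N S \<beta> lam M) / real N - ?T\<bar>)"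
      using training_expect_abs[of \<beta> hv M N "\<lambda>S. ln (Zpart N S \<beta> lam M) / real N - ?T"] by simp
    also have "\<dots> \<le> training_expect \<beta> hv M N
        (\<lambda>S. ?K * (\<Sum>c\<in>spins M. \<bar>column_law M N S c - ?w c\<bar>) + 0 * 0 + laplace_error M \<beta> N)"
    proof (rule training_expect_mono)
      fix S
      assume "S \<in> training_sets M N"
      then show "\<bar>ln (Zpart N S \<beta> lam M) / real N - ?T\<bar>
          \<le> ?K * (\<Sum>c\<in>spins M. \<bar>column_law M N S c - ?w c\<bar>) + 0 * 0 + laplace_error M \<beta> N"
        using ln_Zpart_close_to_sup[OF \<open>S \<in> training_sets M N\<close> that less_imp_le[OF assms(1)] w, of lam]
        by simp
    qed
    also have "\<dots> = err N"
      unfolding training_expect_linear err_def by (simp add: training_expect_sum finite_spins)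
    finally show ?thesis .
  qed
  then have bound: "\<forall>\<^sub>F N in sequentially. norm (expected_logZ \<beta> lam hv M N / real N - ?T) \<le> err N"
    unfolding eventually_sequentially real_norm_def by blast
  have "(\<lambda>N. training_expect \<beta> hv M N (\<lambda>S. \<bar>column_law M N S c - ?w c\<bar>)) \<longlonglongrightarrow> 0"
    if "c \<in> spins M" for c
    using assms(2) that by (rule expect_column_law_deviation_limit)
  then have "err \<longlonglongrightarrow> 0 + ?K * (\<Sum>c\<in>spins M. 0)"
    unfolding err_def by (intro tendsto_add tendsto_mult tendsto_const tendsto_sum laplace_error_tendsto_zero)
  then have "err \<longlonglongrightarrow> 0"
    by simp
  with bound have "(\<lambda>N. expected_logZ \<beta> lam hv M N / real N - ?T) \<longlonglongrightarrow> 0"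
    by (rule Lim_null_comparison)
  then show ?thesis
    by (simp add: LIM_zero_iff)
qed

section \<open>Independence of the signs of the fields\<close>

definition flip_signs :: "nat \<Rightarrow> (nat \<Rightarrow> real) \<Rightarrow> (nat \<Rightarrow> real) \<Rightarrow> nat \<Rightarrow> real" where
  "flip_signs M \<epsilon> p = (\<lambda>\<mu>\<in>{..<M}. \<epsilon> \<mu> * p \<mu>)"

lemma flip_signs_flip_signs:
  assumes "\<epsilon> \<in> spins M" "p \<in> {..<M} \<rightarrow>\<^sub>E A"
  shows "flip_signs M \<epsilon> (flip_signs M \<epsilon> p) = p"
proof -
  have "\<epsilon> \<mu> * (\<epsilon> \<mu> * p \<mu>) = p \<mu>" if "\<mu> < M" for \<mu>
    using spins_values[OF assms(1) that] by auto
  with assms(2) show ?thesis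
    unfolding flip_signs_def by (auto simp: fun_eq_iff PiE_iff extensional_def)
qed

lemma flip_signs_spins:
  assumes "\<epsilon> \<in> spins M" "c \<in> spins M"
  shows "flip_signs M \<epsilon> c \<in> spins M"
proof -
  have "\<epsilon> \<mu> * c \<mu> \<in> {-1, 1}" if "\<mu> < M" for \<mu>
    using spins_values[OF assms(1) that] spins_values[OF assms(2) that] by auto
  then show ?thesis
    unfolding flip_signs_def spins_def by (simp only: restrict_PiE_iff) simp
qed

lemma flip_signs_PiE: "flip_signs M \<epsilon> p \<in> {..<M} \<rightarrow>\<^sub>E (UNIV::real set)"
  unfolding flip_signs_def by (simp only: restrict_PiE_iff) simp

lemma flip_signs_image:
  assumes "\<epsilon> \<in> spins M"
  shows "flip_signs M \<epsilon> ` ({..<M} \<rightarrow>\<^sub>E UNIV) = {..<M} \<rightarrow>\<^sub>E (UNIV::real set)"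
proof
  show "flip_signs M \<epsilon> ` ({..<M} \<rightarrow>\<^sub>E UNIV) \<subseteq> {..<M} \<rightarrow>\<^sub>E (UNIV::real set)"
    using flip_signs_PiE by blast
  show "{..<M} \<rightarrow>\<^sub>E UNIV \<subseteq> flip_signs M \<epsilon> ` ({..<M} \<rightarrow>\<^sub>E (UNIV::real set))"
  proof
    fix q :: "nat \<Rightarrow> real"
    assume "q \<in> {..<M} \<rightarrow>\<^sub>E UNIV"
    then have "q = flip_signs M \<epsilon> (flip_signs M \<epsilon> q)"
      using flip_signs_flip_signs[OF assms] by simp
    then show "q \<in> flip_signs M \<epsilon> ` ({..<M} \<rightarrow>\<^sub>E UNIV)"
      using flip_signs_PiE by blast
  qed
qed

lemma g_weighted_flip_signs:
  assumes "\<epsilon> \<in> spins M"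
  shows "g_weighted M \<beta> lam (product_law M (\<lambda>\<mu>. \<epsilon> \<mu> * m)) p
    = g_weighted M \<beta> lam (product_law M (\<lambda>_. m)) (flip_signs M \<epsilon> p)"
proof -
  let ?L = "\<lambda>c q. ln (cosh (\<beta> * (\<Sum>\<mu><M. c \<mu> * q \<mu>) + lam))"
  have sign: "\<epsilon> \<mu> * \<epsilon> \<mu> = 1" if "\<mu> < M" for \<mu>
    using spins_values[OF assms that] by auto
  have "(\<Sum>\<mu><M. (flip_signs M \<epsilon> p \<mu>)\<^sup>2) = (\<Sum>\<mu><M. (p \<mu>)\<^sup>2)"
    unfolding flip_signs_def using sign by (intro sum.cong refl) (simp add: power2_eq_square algebra_simps)
  moreover have "product_law M (\<lambda>\<mu>. \<epsilon> \<mu> * m) c = product_law M (\<lambda>_. m) (flip_signs M \<epsilon> c)" for c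
    unfolding product_law_def flip_signs_def by (intro prod.cong refl) (simp add: mult_ac)
  moreover have "(\<Sum>\<mu><M. c \<mu> * p \<mu>) = (\<Sum>\<mu><M. flip_signs M \<epsilon> c \<mu> * flip_signs M \<epsilon> p \<mu>)" for c
    unfolding flip_signs_def using sign by (intro sum.cong refl) (simp add: algebra_simps)
  moreover have "(\<Sum>c\<in>spins M. product_law M (\<lambda>_. m) (flip_signs M \<epsilon> c) * ?L (flip_signs M \<epsilon> c) (flip_signs M \<epsilon> p))
      = (\<Sum>c\<in>spins M. product_law M (\<lambda>_. m) c * ?L c (flip_signs M \<epsilon> p))"
    using flip_signs_flip_signs[OF assms] flip_signs_spins[OF assms]
    by (intro sum.reindex_bij_witness[where i = "flip_signs M \<epsilon>" and j = "flip_signs M \<epsilon>"])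
      (auto simp: spins_def)
  ultimately show ?thesis
    unfolding g_weighted_def by simp
qed

lemma sup_g_weighted_flip_signs:
  assumes "\<epsilon> \<in> spins M"
  shows "sup_g_weighted M \<beta> lam (product_law M (\<lambda>\<mu>. \<epsilon> \<mu> * m)) = sup_g_weighted M \<beta> lam (product_law M (\<lambda>_. m))"
proof -
  have "sup_g_weighted M \<beta> lam (product_law M (\<lambda>\<mu>. \<epsilon> \<mu> * m))
      = Sup (g_weighted M \<beta> lam (product_law M (\<lambda>_. m)) ` flip_signs M \<epsilon> ` ({..<M} \<rightarrow>\<^sub>E UNIV))"
    unfolding sup_g_weighted_def g_weighted_flip_signs[OF assms] by (simp only: image_image)
  then show ?thesis
    unfolding flip_signs_image[OF assms] sup_g_weighted_def .
qed

theorem theorem1: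
  fixes M :: nat and \<beta> lam h :: real
  assumes "M \<ge> 1" and "\<beta> > 0"
    and "\<beta> \<le> 1 \<or> (\<beta> > 1 \<and> lam \<noteq> 0 \<and> h \<noteq> 0)"
  shows "\<forall>\<epsilon>\<in>spins M.
           (\<lambda>N. expected_logZ \<beta> lam (\<lambda>\<mu>. h * \<epsilon> \<mu>) M N / real N)
             \<longlonglongrightarrow> (SUP p\<in>({..<M} \<rightarrow>\<^sub>E (UNIV :: real set)). g_fun M p \<beta> lam h)"
proof
  fix \<epsilon>
  assume \<epsilon>: "\<epsilon> \<in> spins M"
  have regime: "cw_regime \<beta> h"
    using assms(2,3) unfolding cw_regime_def by auto
  have regime_\<mu>: "cw_regime \<beta> (h * \<epsilon> \<mu>)" and m0_\<mu>: "m0 \<beta> (h * \<epsilon> \<mu>) = \<epsilon> \<mu> * m0 \<beta> h" if "\<mu> < M" for \<mu>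
    using spins_values[OF \<epsilon> that] regime cw_regime_minus[OF regime] m0_minus[OF regime] by auto
  have "(\<lambda>N. expected_logZ \<beta> lam (\<lambda>\<mu>. h * \<epsilon> \<mu>) M N / real N)
      \<longlonglongrightarrow> sup_g_weighted M \<beta> lam (product_law M (\<lambda>\<mu>. m0 \<beta> (h * \<epsilon> \<mu>)))"
    using assms(2) regime_\<mu> by (rule expected_logZ_limit)
  also have "product_law M (\<lambda>\<mu>. m0 \<beta> (h * \<epsilon> \<mu>)) = product_law M (\<lambda>\<mu>. \<epsilon> \<mu> * m0 \<beta> h)"
    unfolding product_law_def using m0_\<mu> by (intro ext prod.cong) auto
  also have "sup_g_weighted M \<beta> lam \<dots> = sup_g_weighted M \<beta> lam (product_law M (\<lambda>_. m0 \<beta> h))"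
    by (rule sup_g_weighted_flip_signs[OF \<epsilon>])
  also have "\<dots> = (SUP p\<in>({..<M} \<rightarrow>\<^sub>E UNIV). g_fun M p \<beta> lam h)"
    unfolding sup_g_weighted_def g_fun_eq_g_weighted iid_prob_eq_product_law ..
  finally show "(\<lambda>N. expected_logZ \<beta> lam (\<lambda>\<mu>. h * \<epsilon> \<mu>) M N / real N)
      \<longlonglongrightarrow> (SUP p\<in>({..<M} \<rightarrow>\<^sub>E (UNIV :: real set)). g_fun M p \<beta> lam h)" .
qed

end
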